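(* Let $G$ be a graph with $n$ nodes, GSO $\mathbf{\Delta}\in\mathbb{R}^{n\times n}$ and GWM $\boldsymbol{A}=n\mathbf{\Delta}$. Let $h:\mathbb{R}\to\mathbb{R}$ be continuous with $h(0)=0$. Then $h(T_{W_{\boldsymbol{A}}})=T_{W_{nh(\mathbf{\Delta})}}$ as operators on $L^2[0,1]$.
   Context: A graph with graph shift operator (GSO) is a triple $G=(V,E,\mathbf{\Delta})$ with $V=\{1,\dots,n\}$ and $\mathbf{\Delta}\in\mathbb{R}^{n\times n}$ symmetric; its graph weight matrix (GWM) is $\boldsymbol{A}=n\mathbf{\Delta}$. For a continuous $h:\mathbb{R}\to\mathbb{R}$ and a symmetric matrix or bounded self-adjoint operator $T$, $h(T)$ is defined by continuous functional calculus (for $\mathbf{\Delta}$ with orthonormal eigenpairs $(\lambda_j,\phi_j)$: $h(\mathbf{\Delta})\mathbf{x}=\sum_j h(\lambda_j)\langle\mathbf{x},\phi_j\rangle\phi_j$; for a compact self-adjoint operator with an orthonormal eigenbasis $(\phi_j)$, including kernel vectors, $h(T)\psi=\sum_j h(\lambda_j)\langle\psi,\phi_j\rangle\phi_j$). For $n\in\mathbb{N}$ let $P_k=[(k-1)/n,k/n)$, $k=1,\dots,n$. For $\boldsymbol{B}\in\mathbb{R}^{n\times n}$ the induced graphon is $W_{\boldsymbol{B}}(u,v)=\sum_{i,j}\boldsymbol{B}_{ij}\chi_{P_i}(u)\chi_{P_j}(v)$; thus $W_{nh(\mathbf{\Delta})}$ is the graphon induced by the matrix $nh(\mathbf{\Delta})$.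 For a bounded symmetric measurable $W:[0,1]^2\to\mathbb{R}$, $T_W\psi(v)=\int_0^1W(v,u)\psi(u)\,du$ on $L^2[0,1]$. *)

theory Defs
  imports "HOL-Analysis.Analysis"
begin

text \<open>Matrices of size n are represented as functions nat => nat => real, only the
  entries with indices < n being relevant (index k corresponds to node k+1).\<close>

definition mat_orth_eigenbasis ::
  "nat \<Rightarrow> (nat \<Rightarrow> nat \<Rightarrow> real) \<Rightarrow> (nat \<Rightarrow> real) \<Rightarrow> (nat \<Rightarrow> nat \<Rightarrow> real) \<Rightarrow> bool" where
  "mat_orth_eigenbasis n D lam phi \<longleftrightarrow>
     (\<forall>j<n. \<forall>k<n. (\<Sum>i<n. phi j i * phi k i) = (if j = k then 1 else 0)) \<and>
     (\<forall>j<n. \<forall>i<n. (\<Sum>k<n. D i k * phi j k) = lam j * phi j i)"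

definition mat_fun :: "(real \<Rightarrow> real) \<Rightarrow> nat \<Rightarrow> (nat \<Rightarrow> nat \<Rightarrow> real) \<Rightarrow> nat \<Rightarrow> nat \<Rightarrow> real" where
  "mat_fun h n D =
     (let (lam, phi) = (SOME (lam, phi). mat_orth_eigenbasis n D lam phi)
      in (\<lambda>i k. \<Sum>j<n. h (lam j) * phi j i * phi j k))"

text \<open>Partition intervals P_{k+1} = [k/n, (k+1)/n) and induced step graphon.\<close>
definition part_int :: "nat \<Rightarrow> nat \<Rightarrow> real set" where
  "part_int n k = {real k / real n ..< real (Suc k) / real n}"

definition induced_graphon :: "nat \<Rightarrow> (nat \<Rightarrow> nat \<Rightarrow> real) \<Rightarrow> real \<Rightarrow> real \<Rightarrow> real" where
  "induced_graphon n B u v =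
     (\<Sum>i<n. \<Sum>j<n. B i j * indicator (part_int n i) u * indicator (part_int n j) v)"

text \<open>L^2[0,1], represented by real functions (equality understood almost everywhere).\<close>
definition L2 :: "(real \<Rightarrow> real) set" where
  "L2 = {f. f \<in> borel_measurable (lebesgue_on {0..1}) \<and>
            integrable (lebesgue_on {0..1}) (\<lambda>x. (f x)\<^sup>2)}"

definition l2_inner :: "(real \<Rightarrow> real) \<Rightarrow> (real \<Rightarrow> real) \<Rightarrow> real" where
  "l2_inner f g = (LINT x | lebesgue_on {0..1}. f x * g x)"

definition l2_norm :: "(real \<Rightarrow> real) \<Rightarrow> real" where
  "l2_norm f = sqrt (l2_inner f f)"

definition integral_op :: "(real \<Rightarrow> real \<Rightarrow> real) \<Rightarrow> (real \<Rightarrow> real) \<Rightarrow> real \<Rightarrow> real" where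
  "integral_op W psi v = (LINT u | lebesgue_on {0..1}. W v u * psi u)"

definition op_orth_eigenbasis ::
  "((real \<Rightarrow> real) \<Rightarrow> real \<Rightarrow> real) \<Rightarrow> (nat \<Rightarrow> real) \<Rightarrow> (nat \<Rightarrow> real \<Rightarrow> real) \<Rightarrow> bool" where
  "op_orth_eigenbasis T lam phi \<longleftrightarrow>
     (\<forall>j. phi j \<in> L2) \<and>
     (\<forall>j k. l2_inner (phi j) (phi k) = (if j = k then 1 else 0)) \<and>
     (\<forall>f\<in>L2. (\<lambda>N. l2_norm (\<lambda>x. f x - (\<Sum>j<N. l2_inner f (phi j) * phi j x))) \<longlonglongrightarrow> 0) \<and>
     (\<forall>j. l2_norm (\<lambda>x. T (phi j) x - lam j * phi j x) = 0)"

definition op_fun :: "(real \<Rightarrow> real) \<Rightarrow> ((real \<Rightarrow> real) \<Rightarrow> real \<Rightarrow> real) \<Rightarrow> (real \<Rightarrow> real) \<Rightarrow> real \<Rightarrow> real" where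
  "op_fun h T psi =
     (let (lam, phi) = (SOME (lam, phi). op_orth_eigenbasis T lam phi)
      in (SOME g. g \<in> L2 \<and>
           (\<lambda>N. l2_norm (\<lambda>x. g x - (\<Sum>j<N. h (lam j) * l2_inner psi (phi j) * phi j x)))
             \<longlonglongrightarrow> 0))"

end

theory Submission
  imports Defs
begin

definition dot :: "nat \<Rightarrow> (nat \<Rightarrow> real) \<Rightarrow> (nat \<Rightarrow> real) \<Rightarrow> real" where
  "dot n x y = (\<Sum>i<n. x i * y i)"

definition mat_vec :: "nat \<Rightarrow> (nat \<Rightarrow> nat \<Rightarrow> real) \<Rightarrow> (nat \<Rightarrow> real) \<Rightarrow> nat \<Rightarrow> real" where
  "mat_vec n A x i = (\<Sum>k<n. A i k * x k)"

definition quad_form :: "nat \<Rightarrow> (nat \<Rightarrow> nat \<Rightarrow> real) \<Rightarrow> (nat \<Rightarrow> real) \<Rightarrow> real" where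
  "quad_form n A x = dot n x (mat_vec n A x)"

definition orthonormal_on :: "nat \<Rightarrow> 'a set \<Rightarrow> ('a \<Rightarrow> nat \<Rightarrow> real) \<Rightarrow> bool" where
  "orthonormal_on n I v \<longleftrightarrow> (\<forall>j\<in>I. \<forall>k\<in>I. dot n (v j) (v k) = (if j = k then 1 else 0))"

lemma mat_orth_eigenbasis_iff:
  "mat_orth_eigenbasis n D lam phi \<longleftrightarrow>
     orthonormal_on n {..<n} phi \<and> (\<forall>j<n. \<forall>i<n. mat_vec n D (phi j) i = lam j * phi j i)"
  unfolding mat_orth_eigenbasis_def orthonormal_on_def dot_def mat_vec_def by auto

lemma dot_commute: "dot n x y = dot n y x"
  by (simp add: dot_def mult.commute)

lemma dot_self_nonneg: "dot n x x \<ge> 0"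
  by (simp add: dot_def sum_nonneg)

lemma dot_self_eq_0_iff: "dot n x x = 0 \<longleftrightarrow> (\<forall>i<n. x i = 0)"
  by (auto simp: dot_def sum_nonneg_eq_0_iff)

lemma dot_cong: "(\<And>i. i < n \<Longrightarrow> x i = x' i) \<Longrightarrow> (\<And>i. i < n \<Longrightarrow> y i = y' i) \<Longrightarrow> dot n x y = dot n x' y'"
  by (simp add: dot_def)

lemma dot_add_left: "dot n (\<lambda>i. x i + y i) w = dot n x w + dot n y w"
  by (simp add: dot_def distrib_right sum.distrib)

lemma dot_diff_left: "dot n (\<lambda>i. x i - y i) w = dot n x w - dot n y w"
  by (simp add: dot_def left_diff_distrib sum_subtractf)

lemma dot_mult_left: "dot n (\<lambda>i. c * x i) w = c * dot n x w"
  by (simp add: dot_def sum_distrib_left mult.assoc)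

lemma dot_divide_left: "dot n (\<lambda>i. x i / c) w = dot n x w / c"
  by (simp add: dot_def sum_divide_distrib)

lemma dot_sum_left: "dot n (\<lambda>i. \<Sum>j\<in>J. a j * v j i) w = (\<Sum>j\<in>J. a j * dot n (v j) w)"
proof -
  have "dot n (\<lambda>i. \<Sum>j\<in>J. a j * v j i) w = (\<Sum>i<n. \<Sum>j\<in>J. a j * (v j i * w i))"
    by (simp add: dot_def sum_distrib_right mult.assoc)
  also have "\<dots> = (\<Sum>j\<in>J. a j * dot n (v j) w)"
    by (subst sum.swap) (simp add: dot_def sum_distrib_left)
  finally show ?thesis .
qed

lemma dot_add_right: "dot n w (\<lambda>i. x i + y i) = dot n w x + dot n w y"
  by (simp add: dot_commute[of n w] dot_add_left)

lemma dot_diff_right: "dot n w (\<lambda>i. x i - y i) = dot n w x - dot n w y"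
  by (simp add: dot_commute[of n w] dot_diff_left)

lemma dot_mult_right: "dot n w (\<lambda>i. c * x i) = c * dot n w x"
  by (simp add: dot_commute[of n w] dot_mult_left)

lemma dot_sum_right: "dot n w (\<lambda>i. \<Sum>j\<in>J. a j * v j i) = (\<Sum>j\<in>J. a j * dot n w (v j))"
  by (simp add: dot_commute[of n w] dot_sum_left)

lemma dot_unit_left: "i < n \<Longrightarrow> dot n (\<lambda>k. if k = i then 1 else 0) x = x i"
  by (simp add: dot_def if_distrib[of "\<lambda>c. c * _"] cong: if_cong)

lemma dot_normalize:
  assumes "dot n x x > 0"
  shows "dot n (\<lambda>i. x i / sqrt (dot n x x)) (\<lambda>i. x i / sqrt (dot n x x)) = 1"
proof -
  have "dot n (\<lambda>i. x i / sqrt (dot n x x)) (\<lambda>i. x i / sqrt (dot n x x))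
      = dot n x x / (sqrt (dot n x x) * sqrt (dot n x x))"
    by (simp add: dot_def sum_divide_distrib)
  also have "sqrt (dot n x x) * sqrt (dot n x x) = dot n x x"
    using assms by simp
  finally show ?thesis
    using assms by simp
qed

lemma mat_vec_symmetric:
  assumes "\<forall>i<n. \<forall>j<n. A i j = A j i"
  shows "dot n (mat_vec n A x) y = dot n x (mat_vec n A y)"
proof -
  have "dot n (mat_vec n A x) y = (\<Sum>i<n. \<Sum>k<n. A i k * x k * y i)"
    by (simp add: dot_def mat_vec_def sum_distrib_right)
  also have "\<dots> = (\<Sum>k<n. \<Sum>i<n. x k * (A k i * y i))"
    using assms by (subst sum.swap) (simp add: mult_ac)
  also have "\<dots> = dot n x (mat_vec n A y)"
    by (simp add: dot_def mat_vec_def sum_distrib_left)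
  finally show ?thesis .
qed

lemma mat_vec_add: "mat_vec n A (\<lambda>i. x i + y i) = (\<lambda>i. mat_vec n A x i + mat_vec n A y i)"
  by (simp add: mat_vec_def[abs_def] distrib_left sum.distrib)

lemma mat_vec_mult: "mat_vec n A (\<lambda>i. c * x i) = (\<lambda>i. c * mat_vec n A x i)"
  by (simp add: mat_vec_def[abs_def] sum_distrib_left mult.left_commute)

lemma mat_vec_cong: "(\<And>k. k < n \<Longrightarrow> x k = y k) \<Longrightarrow> mat_vec n A x i = mat_vec n A y i"
  by (simp add: mat_vec_def)

lemma orthonormal_on_sum_dot:
  assumes "orthonormal_on n I v" "finite I" "k \<in> I"
  shows "(\<Sum>j\<in>I. a j * dot n (v j) (v k)) = a k"
proof -
  have "(\<Sum>j\<in>I. a j * dot n (v j) (v k)) = (\<Sum>j\<in>I. if j = k then a k else 0)"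
    using assms by (intro sum.cong) (auto simp: orthonormal_on_def)
  then show ?thesis
    using assms by simp
qed

lemma orthonormal_on_residual_orthogonal:
  assumes "orthonormal_on n I v" "finite I" "k \<in> I"
  shows "dot n (\<lambda>i. x i - (\<Sum>j\<in>I. dot n x (v j) * v j i)) (v k) = 0"
  using orthonormal_on_sum_dot[OF assms] by (simp add: dot_diff_left dot_sum_left)

lemma orthonormal_on_residual_norm:
  assumes v: "orthonormal_on n I v" and I: "finite I"
  shows "dot n (\<lambda>i. x i - (\<Sum>j\<in>I. dot n x (v j) * v j i)) (\<lambda>i. x i - (\<Sum>j\<in>I. dot n x (v j) * v j i))
    = dot n x x - (\<Sum>j\<in>I. (dot n x (v j))\<^sup>2)"
    (is "dot n ?r ?r = _")
proof -
  have "dot n ?r ?r = dot n ?r x - (\<Sum>j\<in>I. dot n x (v j) * dot n ?r (v j))"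
    by (simp only: dot_diff_right dot_sum_right)
  also have "\<dots> = dot n ?r x"
    using orthonormal_on_residual_orthogonal[OF v I] by simp
  also have "\<dots> = dot n x x - (\<Sum>j\<in>I. dot n x (v j) * dot n (v j) x)"
    by (simp only: dot_diff_left dot_sum_left)
  finally show ?thesis
    by (simp add: dot_commute[of n "v _" x] power2_eq_square)
qed

lemma bessel_inequality:
  assumes "orthonormal_on n I v" "finite I"
  shows "(\<Sum>j\<in>I. (dot n x (v j))\<^sup>2) \<le> dot n x x"
  using dot_self_nonneg[of n "\<lambda>i. x i - (\<Sum>j\<in>I. dot n x (v j) * v j i)"]
  unfolding orthonormal_on_residual_norm[OF assms] by simp

lemma orthonormal_on_coordinate_bound:
  assumes "orthonormal_on n I v" "finite I" "i < n"
  shows "(\<Sum>j\<in>I. (v j i)\<^sup>2) \<le> 1"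
  using bessel_inequality[OF assms(1,2), of "\<lambda>k. if k = i then 1 else 0"] assms(3)
  by (simp add: dot_unit_left)

lemma orthonormal_on_sum_squares:
  assumes "orthonormal_on n I v"
  shows "(\<Sum>i<n. \<Sum>j\<in>I. (v j i)\<^sup>2) = real (card I)"
proof -
  have "(\<Sum>i<n. \<Sum>j\<in>I. (v j i)\<^sup>2) = (\<Sum>j\<in>I. dot n (v j) (v j))"
    unfolding dot_def power2_eq_square by (rule sum.swap)
  also have "\<dots> = (\<Sum>j\<in>I. 1)"
    using assms by (intro sum.cong) (auto simp: orthonormal_on_def)
  finally show ?thesis by simp
qed

lemma orthonormal_on_card_le:
  assumes "orthonormal_on n I v" "finite I"
  shows "card I \<le> n"
proof -
  have "real (card I) \<le> (\<Sum>i<n. 1)"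
    unfolding orthonormal_on_sum_squares[OF assms(1), symmetric]
    by (intro sum_mono orthonormal_on_coordinate_bound[OF assms]) auto
  then show ?thesis by simp
qed

lemma orthonormal_on_finite:
  assumes "orthonormal_on n I v"
  shows "finite I"
proof (rule ccontr)
  assume "infinite I"
  then obtain F where F: "F \<subseteq> I" "finite F" "card F = Suc n"
    using infinite_arbitrarily_large by blast
  have "orthonormal_on n F v"
    using assms F(1) unfolding orthonormal_on_def by blast
  from orthonormal_on_card_le[OF this F(2)] F(3) show False
    by linarith
qed

lemma orthonormal_on_extend:
  assumes "orthonormal_on n {..<k} v" "dot n x x = 1" "\<forall>j<k. dot n x (v j) = 0"
  shows "orthonormal_on n {..<Suc k} (v(k := x))"
  unfolding orthonormal_on_def
proof (intro ballI)
  fix j l assume "j \<in> {..<Suc k}" "l \<in> {..<Suc k}"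
  then have "j < Suc k" "l < Suc k" by auto
  with assms show "dot n ((v(k := x)) j) ((v(k := x)) l) = (if j = l then 1 else 0)"
    unfolding orthonormal_on_def
    by (cases "j = k"; cases "l = k") (simp_all add: dot_commute[of n "v j" x])
qed

lemma orthonormal_basis_expansion:
  assumes v: "orthonormal_on n {..<n} v" and i: "i < n"
  shows "x i = (\<Sum>l<n. dot n x (v l) * v l i)"
proof -
  define r where "r i = x i - (\<Sum>l<n. dot n x (v l) * v l i)" for i
  have orth: "\<forall>l<n. dot n r (v l) = 0"
    using orthonormal_on_residual_orthogonal[OF v] unfolding r_def[abs_def] by blast
  have "dot n r r = 0"
  proof (rule ccontr)
    assume "dot n r r \<noteq> 0"
    then have pos: "dot n r r > 0"
      using dot_self_nonneg[of n r] by linarith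
    have "orthonormal_on n {..<Suc n} (v(n := \<lambda>i. r i / sqrt (dot n r r)))"
      using orth by (intro orthonormal_on_extend[OF v] dot_normalize[OF pos]) (simp add: dot_divide_left)
    from orthonormal_on_card_le[OF this] show False by simp
  qed
  then have "r i = 0"
    using i dot_self_eq_0_iff by blast
  then show ?thesis
    by (simp add: r_def)
qed

subsection \<open>Spectral theorem for real symmetric matrices\<close>

definition orth_unit_sphere :: "nat \<Rightarrow> nat \<Rightarrow> (nat \<Rightarrow> nat \<Rightarrow> real) \<Rightarrow> (nat \<Rightarrow> real) set" where
  "orth_unit_sphere n k v = {x. (\<forall>i\<ge>n. x i = 0) \<and> dot n x x = 1 \<and> (\<forall>j<k. dot n x (v j) = 0)}"

lemma continuous_on_dot:
  "(\<And>i. continuous_on S (\<lambda>x. f x i)) \<Longrightarrow> (\<And>i. continuous_on S (\<lambda>x. g x i))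
    \<Longrightarrow> continuous_on S (\<lambda>x. dot n (f x) (g x))"
  unfolding dot_def by (intro continuous_on_sum continuous_on_mult)

lemma continuous_on_coordinate: "continuous_on S (\<lambda>x::nat \<Rightarrow> real. x i)"
  by (rule continuous_on_subset[OF continuous_on_product_coordinates]) simp

lemma continuous_on_mat_vec: "continuous_on S (\<lambda>x. mat_vec n A x i)"
  unfolding mat_vec_def by (intro continuous_on_sum continuous_on_mult continuous_on_const
      continuous_on_coordinate)

lemma compact_orth_unit_sphere: "compact (orth_unit_sphere n k v)"
proof -
  define B where "B = PiE UNIV (\<lambda>i::nat. if i < n then {-1..1::real} else {0})"
  define C where "C = {x. dot n x x = 1} \<inter> (\<Inter>j<k. {x. dot n x (v j) = 0})"
  have "compactin (product_topology (\<lambda>_. euclidean) UNIV) B"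
    unfolding B_def by (subst compactin_PiE) auto
  then have "compact B"
    by (simp add: euclidean_product_topology)
  moreover have "closed C"
    unfolding C_def
    by (intro closed_Int closed_INT ballI closed_Collect_eq continuous_on_dot continuous_on_coordinate
        continuous_on_const)
  moreover have "orth_unit_sphere n k v = B \<inter> C"
  proof -
    have B: "x \<in> B \<longleftrightarrow> (\<forall>i. if i < n then \<bar>x i\<bar> \<le> 1 else x i = 0)" for x
      by (auto simp: B_def PiE_iff abs_le_iff if_distrib[of "\<lambda>S. x _ \<in> S"])
    have "\<bar>x i\<bar> \<le> 1" if "dot n x x = 1" "i < n" for x i
    proof -
      have "(x i)\<^sup>2 \<le> dot n x x"
        unfolding dot_def power2_eq_square using that(2)
        by (intro member_le_sum[of i "{..<n}" "\<lambda>i. x i * x i"]) auto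
      then show ?thesis using that(1) by (simp add: abs_square_le_1)
    qed
    then show ?thesis
      unfolding orth_unit_sphere_def C_def by (auto simp: B not_less)
  qed
  ultimately show ?thesis by (simp add: compact_Int_closed)
qed

lemma orth_unit_sphere_normalize:
  assumes "dot n x x > 0" "\<forall>j<k. dot n x (v j) = 0"
  shows "(\<lambda>i. if i < n then x i / sqrt (dot n x x) else 0) \<in> orth_unit_sphere n k v"
    (is "?y \<in> _")
proof -
  have "dot n ?y w = dot n (\<lambda>i. x i / sqrt (dot n x x)) w'" if "\<And>i. i < n \<Longrightarrow> w i = w' i" for w w'
    using that by (intro dot_cong) simp_all
  then show ?thesis
    using assms dot_normalize[OF assms(1)]
    by (simp add: orth_unit_sphere_def dot_divide_left)
qed

lemma orth_unit_sphere_nonempty: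
  assumes v: "orthonormal_on n {..<k} v" and k: "k < n"
  shows "orth_unit_sphere n k v \<noteq> {}"
proof -
  have "\<exists>i<n. (\<Sum>j<k. (v j i)\<^sup>2) < 1"
  proof (rule ccontr)
    assume "\<not> ?thesis"
    then have "\<forall>i<n. 1 \<le> (\<Sum>j<k. (v j i)\<^sup>2)"
      by (meson not_less)
    then have "(\<Sum>i<n. 1) \<le> (\<Sum>i<n. \<Sum>j<k. (v j i)\<^sup>2)"
      by (intro sum_mono) simp
    with k show False by (simp add: orthonormal_on_sum_squares[OF v])
  qed
  then obtain i where i: "i < n" "(\<Sum>j<k. (v j i)\<^sup>2) < 1" by blast
  define e where "e k = (if k = i then 1 else 0 :: real)" for k
  define r where "r l = e l - (\<Sum>j<k. dot n e (v j) * v j l)" for l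
  have "dot n r r = 1 - (\<Sum>j<k. (v j i)\<^sup>2)"
    using orthonormal_on_residual_norm[OF v, of e] i(1)
    by (simp add: r_def[abs_def] e_def[abs_def] dot_unit_left)
  then have "dot n r r > 0" using i(2) by simp
  moreover have "\<forall>j<k. dot n r (v j) = 0"
    using orthonormal_on_residual_orthogonal[OF v] by (simp add: r_def[abs_def])
  ultimately show ?thesis
    using orth_unit_sphere_normalize by blast
qed

lemma quad_form_cong: "(\<And>i. i < n \<Longrightarrow> x i = y i) \<Longrightarrow> quad_form n A x = quad_form n A y"
  unfolding quad_form_def by (intro dot_cong mat_vec_cong) simp_all

lemma quad_form_mult: "quad_form n A (\<lambda>i. c * x i) = c\<^sup>2 * quad_form n A x"
  by (simp add: quad_form_def mat_vec_mult dot_mult_left dot_mult_right power2_eq_square)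

lemma quad_form_le_max:
  assumes x: "x \<in> orth_unit_sphere n k v"
    and max: "\<forall>y\<in>orth_unit_sphere n k v. quad_form n A y \<le> quad_form n A x"
    and y: "\<forall>j<k. dot n y (v j) = 0"
  shows "quad_form n A y \<le> quad_form n A x * dot n y y"
proof (cases "dot n y y = 0")
  case True
  then have "\<forall>i<n. y i = 0"
    by (simp add: dot_self_eq_0_iff)
  then have "quad_form n A y = 0"
    by (simp add: quad_form_def dot_def)
  with True show ?thesis by simp
next
  case False
  then have pos: "dot n y y > 0"
    using dot_self_nonneg[of n y] by linarith
  have "quad_form n A (\<lambda>i. if i < n then y i / sqrt (dot n y y) else 0)
      = quad_form n A (\<lambda>i. inverse (sqrt (dot n y y)) * y i)"
    by (intro quad_form_cong) (simp add: divide_inverse mult.commute)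
  also have "\<dots> = quad_form n A y / dot n y y"
    using pos by (simp only: quad_form_mult) (simp add: power_inverse divide_inverse mult.commute)
  finally have "quad_form n A y / dot n y y \<le> quad_form n A x"
    using max orth_unit_sphere_normalize[OF pos y] by metis
  then show ?thesis
    using pos by (simp add: divide_le_eq)
qed

lemma dot_add_mult_self:
  "dot n (\<lambda>i. x i + t * w i) (\<lambda>i. x i + t * w i) = dot n x x + 2 * t * dot n x w + t\<^sup>2 * dot n w w"
  by (simp add: dot_add_left dot_add_right dot_mult_left dot_mult_right dot_commute[of n w x]
      power2_eq_square algebra_simps)

lemma quad_form_add_mult:
  assumes "\<forall>i<n. \<forall>j<n. A i j = A j i"
  shows "quad_form n A (\<lambda>i. x i + t * w i)
    = quad_form n A x + 2 * t * dot n x (mat_vec n A w) + t\<^sup>2 * quad_form n A w"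
proof -
  have "dot n w (mat_vec n A x) = dot n x (mat_vec n A w)"
    using mat_vec_symmetric[OF assms, of w x] by (simp add: dot_commute)
  then show ?thesis
    unfolding quad_form_def mat_vec_add mat_vec_mult dot_add_left dot_add_right dot_mult_left
      dot_mult_right
    by (simp add: power2_eq_square algebra_simps)
qed

lemma nonpos_if_linear_le_quadratic:
  fixes b K :: real
  assumes "\<And>t. t > 0 \<Longrightarrow> t * b \<le> t\<^sup>2 * K"
  shows "b \<le> 0"
proof (rule ccontr)
  assume "\<not> b \<le> 0"
  then have b: "b > 0" by simp
  define t where "t = b / (\<bar>K\<bar> + 1)"
  have t: "t > 0"
    using b by (simp add: t_def add_pos_nonneg)
  have "t * b \<le> t * (t * K)"
    using assms[OF t] by (simp add: power2_eq_square mult.assoc)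
  then have "b \<le> t * K"
    using t by simp
  also have "t * K \<le> t * \<bar>K\<bar>"
    using t by (intro mult_left_mono) simp_all
  also have "t * \<bar>K\<bar> < b"
    using b by (simp add: t_def field_simps add_pos_nonneg)
  finally show False by simp
qed

text \<open>A maximiser of the Rayleigh quotient on the unit sphere of the orthogonal complement of
  eigenvectors is itself an eigenvector: perturbing it in the direction of the residual
  \<open>w = A x - \<mu> x\<close> raises the quotient to first order by \<open>2 t |w|\<^sup>2\<close>.\<close>

lemma rayleigh_maximizer_eigenvector:
  assumes sym: "\<forall>i<n. \<forall>j<n. A i j = A j i"
    and eig: "\<forall>j<k. \<forall>i<n. mat_vec n A (v j) i = lam j * v j i"
    and x: "x \<in> orth_unit_sphere n k v"
    and max: "\<forall>y\<in>orth_unit_sphere n k v. quad_form n A y \<le> quad_form n A x"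
  shows "\<forall>i<n. mat_vec n A x i = quad_form n A x * x i"
proof -
  define \<mu> where "\<mu> = quad_form n A x"
  define w where "w i = mat_vec n A x i - \<mu> * x i" for i
  have x1: "dot n x x = 1" and xv: "\<forall>j<k. dot n x (v j) = 0"
    using x by (auto simp: orth_unit_sphere_def)
  have wv: "dot n w (v j) = 0" if "j < k" for j
  proof -
    have "dot n (mat_vec n A x) (v j) = dot n x (\<lambda>i. lam j * v j i)"
      using eig that by (simp add: mat_vec_symmetric[OF sym] cong: dot_cong)
    then show ?thesis
      using xv that by (simp add: w_def[abs_def] dot_diff_left dot_mult_left dot_mult_right)
  qed
  have wx: "dot n w x = 0"
    using x1 by (simp add: w_def[abs_def] dot_diff_left dot_mult_left \<mu>_def quad_form_def dot_commute)
  have xAw: "dot n x (mat_vec n A w) = dot n w w"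
  proof -
    have "dot n x (mat_vec n A w) = dot n (\<lambda>i. w i + \<mu> * x i) w"
      by (simp add: mat_vec_symmetric[OF sym, symmetric] w_def)
    then show ?thesis
      using wx by (simp add: dot_add_left dot_mult_left dot_commute[of n x])
  qed
  have "t * dot n w w \<le> t\<^sup>2 * (\<mu> * dot n w w - quad_form n A w)" if t: "t > 0" for t
  proof -
    have "\<forall>j<k. dot n (\<lambda>i. x i + t * w i) (v j) = 0"
      using xv wv by (simp add: dot_add_left dot_mult_left)
    then have "quad_form n A (\<lambda>i. x i + t * w i) \<le> \<mu> * dot n (\<lambda>i. x i + t * w i) (\<lambda>i. x i + t * w i)"
      using quad_form_le_max[OF x max] by (simp add: \<mu>_def)
    then have "2 * t * dot n w w \<le> t\<^sup>2 * (\<mu> * dot n w w - quad_form n A w)"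
      using x1 wx xAw
      by (simp add: dot_add_mult_self quad_form_add_mult[OF sym] dot_commute[of n x w] \<mu>_def
          algebra_simps)
    moreover have "t * dot n w w \<le> 2 * t * dot n w w"
      using t dot_self_nonneg[of n w] by simp
    ultimately show ?thesis
      by linarith
  qed
  then have "dot n w w \<le> 0"
    by (rule nonpos_if_linear_le_quadratic)
  then have "dot n w w = 0"
    using dot_self_nonneg[of n w] by linarith
  then have "\<forall>i<n. w i = 0"
    by (simp add: dot_self_eq_0_iff)
  then show ?thesis
    by (simp add: w_def \<mu>_def)
qed

lemma symmetric_orthonormal_eigenvectors:
  assumes sym: "\<forall>i<n. \<forall>j<n. A i j = A j i" and "k \<le> n"
  shows "\<exists>lam v. orthonormal_on n {..<k} v \<and> (\<forall>j<k. \<forall>i<n. mat_vec n A (v j) i = lam j * v j i)"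
  using \<open>k \<le> n\<close>
proof (induction k)
  case 0
  then show ?case by (auto simp: orthonormal_on_def)
next
  case (Suc k)
  then obtain lam v where v: "orthonormal_on n {..<k} v"
    and eig: "\<forall>j<k. \<forall>i<n. mat_vec n A (v j) i = lam j * v j i"
    by auto
  have "continuous_on (orth_unit_sphere n k v) (\<lambda>x. quad_form n A x)"
    unfolding quad_form_def
    by (intro continuous_on_dot continuous_on_mat_vec continuous_on_coordinate)
  then obtain x where x: "x \<in> orth_unit_sphere n k v"
    and max: "\<forall>y\<in>orth_unit_sphere n k v. quad_form n A y \<le> quad_form n A x"
    using continuous_attains_sup[OF compact_orth_unit_sphere orth_unit_sphere_nonempty[OF v]]
      Suc.prems by auto
  have "orthonormal_on n {..<Suc k} (v(k := x))"
    using x by (intro orthonormal_on_extend[OF v]) (auto simp: orth_unit_sphere_def)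
  moreover have "\<forall>j<Suc k. \<forall>i<n. mat_vec n A ((v(k := x)) j) i = (lam(k := quad_form n A x)) j * (v(k := x)) j i"
    using eig rayleigh_maximizer_eigenvector[OF sym eig x max] by (simp add: less_Suc_eq)
  ultimately show ?case by blast
qed

lemma mat_orth_eigenbasis_exists:
  assumes "\<forall>i<n. \<forall>j<n. D i j = D j i"
  shows "\<exists>lam phi. mat_orth_eigenbasis n D lam phi"
  using symmetric_orthonormal_eigenvectors[OF assms order_refl] by (simp add: mat_orth_eigenbasis_iff)

abbreviation lebesgue01 :: "real measure" where
  "lebesgue01 \<equiv> lebesgue_on {0..1}"

lemma finite_measure_lebesgue01: "finite_measure lebesgue01"
  by (rule finite_measure_lebesgue_on) (simp add: lmeasurable_cbox[of 0 1, simplified])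

lemma measure_lebesgue01_Ico:
  assumes "0 \<le> a" "a \<le> b" "b \<le> 1"
  shows "measure lebesgue01 {a..<b} = b - a"
  using assms by (subst measure_restrict_space) auto

subsection \<open>Square integrable functions on the unit interval\<close>

lemma L2_borel_measurable: "f \<in> L2 \<Longrightarrow> f \<in> borel_measurable lebesgue01"
  and L2_integrable_square: "f \<in> L2 \<Longrightarrow> integrable lebesgue01 (\<lambda>x. (f x)\<^sup>2)"
  by (simp_all add: L2_def)

lemma integrable_L2_mult:
  assumes "f \<in> L2" "g \<in> L2"
  shows "integrable lebesgue01 (\<lambda>x. f x * g x)"
proof (rule Bochner_Integration.integrable_bound)
  show "integrable lebesgue01 (\<lambda>x. (f x)\<^sup>2 + (g x)\<^sup>2)"
    using assms by (simp add: L2_integrable_square)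
  show "(\<lambda>x. f x * g x) \<in> borel_measurable lebesgue01"
    using assms by (intro borel_measurable_times L2_borel_measurable)
  have "\<bar>a * b\<bar> \<le> a\<^sup>2 + b\<^sup>2" for a b :: real
  proof -
    have "2 * (\<bar>a\<bar> * \<bar>b\<bar>) \<le> a\<^sup>2 + b\<^sup>2"
      using sum_squares_bound[of "\<bar>a\<bar>" "\<bar>b\<bar>"] by (simp add: mult.assoc)
    moreover have "0 \<le> \<bar>a\<bar> * \<bar>b\<bar>"
      by simp
    ultimately show ?thesis
      unfolding abs_mult by linarith
  qed
  then show "AE x in lebesgue01. norm (f x * g x) \<le> norm ((f x)\<^sup>2 + (g x)\<^sup>2)"
    by simp
qed

lemma L2_bounded:
  assumes "f \<in> borel_measurable lebesgue01" "\<And>x. \<bar>f x\<bar> \<le> B"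
  shows "f \<in> L2"
proof -
  have "(f x)\<^sup>2 \<le> B\<^sup>2" for x
    using power_mono[OF assms(2)[of x] abs_ge_zero, of 2] by simp
  then have "integrable lebesgue01 (\<lambda>x. (f x)\<^sup>2)"
    using assms(1) by (intro finite_measure.integrable_const_bound[OF finite_measure_lebesgue01]) auto
  then show ?thesis
    using assms(1) by (simp add: L2_def)
qed

lemma L2_indicator: "A \<in> sets lebesgue01 \<Longrightarrow> indicator A \<in> L2"
  by (rule L2_bounded[of _ 1]) (auto simp: indicator_def)

lemma L2_const: "(\<lambda>x. c) \<in> L2"
  by (rule L2_bounded[of _ "\<bar>c\<bar>"]) auto

lemma L2_mult: "f \<in> L2 \<Longrightarrow> (\<lambda>x. c * f x) \<in> L2"
  by (simp add: L2_def power_mult_distrib borel_measurable_times)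

lemma L2_add:
  assumes "f \<in> L2" "g \<in> L2"
  shows "(\<lambda>x. f x + g x) \<in> L2"
proof -
  have "integrable lebesgue01 (\<lambda>x. (f x)\<^sup>2 + 2 * (f x * g x) + (g x)\<^sup>2)"
    using assms integrable_L2_mult by (simp add: L2_integrable_square)
  moreover have "(\<lambda>x. (f x + g x)\<^sup>2) = (\<lambda>x. (f x)\<^sup>2 + 2 * (f x * g x) + (g x)\<^sup>2)"
    by (simp add: power2_sum algebra_simps)
  ultimately show ?thesis
    using assms by (simp add: L2_def borel_measurable_add)
qed

lemma L2_diff: "f \<in> L2 \<Longrightarrow> g \<in> L2 \<Longrightarrow> (\<lambda>x. f x - g x) \<in> L2"
  using L2_add[OF _ L2_mult[of g "-1"]] by simp

lemma L2_sum: "(\<And>i. i \<in> I \<Longrightarrow> f i \<in> L2) \<Longrightarrow> (\<lambda>x. \<Sum>i\<in>I. f i x) \<in> L2"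
  by (induction I rule: infinite_finite_induct) (auto intro!: L2_add simp: L2_const[of 0, simplified])

lemma integrable_L2: "f \<in> L2 \<Longrightarrow> integrable lebesgue01 f"
  using integrable_L2_mult[OF _ L2_const, of f 1] by simp

lemma l2_inner_commute: "l2_inner f g = l2_inner g f"
  by (simp add: l2_inner_def mult.commute)

lemma l2_inner_self_nonneg: "l2_inner f f \<ge> 0"
  by (simp add: l2_inner_def)

lemma l2_inner_mult_left: "l2_inner (\<lambda>x. c * f x) g = c * l2_inner f g"
  by (simp add: l2_inner_def mult.assoc)

lemma l2_inner_add_left:
  "f \<in> L2 \<Longrightarrow> g \<in> L2 \<Longrightarrow> h \<in> L2 \<Longrightarrow> l2_inner (\<lambda>x. f x + g x) h = l2_inner f h + l2_inner g h"
  using integrable_L2_mult by (simp add: l2_inner_def distrib_right)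

lemma l2_inner_diff_left:
  "f \<in> L2 \<Longrightarrow> g \<in> L2 \<Longrightarrow> h \<in> L2 \<Longrightarrow> l2_inner (\<lambda>x. f x - g x) h = l2_inner f h - l2_inner g h"
  using integrable_L2_mult by (simp add: l2_inner_def left_diff_distrib)

lemma l2_inner_sum_left:
  assumes "\<And>j. j \<in> J \<Longrightarrow> f j \<in> L2" "g \<in> L2"
  shows "l2_inner (\<lambda>x. \<Sum>j\<in>J. c j * f j x) g = (\<Sum>j\<in>J. c j * l2_inner (f j) g)"
  using assms integrable_L2_mult
  by (simp add: l2_inner_def sum_distrib_right mult.assoc Bochner_Integration.integral_sum)

lemma l2_inner_sum_right:
  assumes "\<And>j. j \<in> J \<Longrightarrow> f j \<in> L2" "g \<in> L2"
  shows "l2_inner g (\<lambda>x. \<Sum>j\<in>J. c j * f j x) = (\<Sum>j\<in>J. c j * l2_inner g (f j))"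
  using l2_inner_sum_left[OF assms, where c=c] by (simp add: l2_inner_commute[of g])

lemma l2_inner_cong_AE:
  assumes "f \<in> borel_measurable lebesgue01" "f' \<in> borel_measurable lebesgue01"
    "g \<in> borel_measurable lebesgue01" "AE x in lebesgue01. f x = f' x"
  shows "l2_inner f g = l2_inner f' g"
  unfolding l2_inner_def using assms by (intro integral_cong_AE) auto

lemma l2_norm_cong_AE:
  assumes "f \<in> borel_measurable lebesgue01" "f' \<in> borel_measurable lebesgue01"
    "AE x in lebesgue01. f x = f' x"
  shows "l2_norm f = l2_norm f'"
proof -
  have "l2_inner f f = l2_inner f' f'"
    unfolding l2_inner_def using assms by (intro integral_cong_AE) auto
  then show ?thesis
    by (simp add: l2_norm_def)
qed

lemma l2_norm_eq_0_AE:
  assumes "f \<in> L2" "l2_norm f = 0"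
  shows "AE x in lebesgue01. f x = 0"
proof -
  have "(LINT x|lebesgue01. (f x)\<^sup>2) = 0"
    using assms(2) l2_inner_self_nonneg[of f] by (simp add: l2_norm_def l2_inner_def power2_eq_square)
  then have "AE x in lebesgue01. (f x)\<^sup>2 = 0"
    using integral_nonneg_eq_0_iff_AE[OF L2_integrable_square[OF assms(1)]] by simp
  then show ?thesis by simp
qed

lemma l2_norm_zero [simp]: "l2_norm (\<lambda>x. 0) = 0"
  by (simp add: l2_norm_def l2_inner_def)

definition orthonormal_seq :: "(nat \<Rightarrow> real \<Rightarrow> real) \<Rightarrow> bool" where
  "orthonormal_seq phi \<longleftrightarrow>
     (\<forall>j. phi j \<in> L2) \<and> (\<forall>j k. l2_inner (phi j) (phi k) = (if j = k then 1 else 0))"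

definition l2_dist_sq :: "(real \<Rightarrow> real) \<Rightarrow> (real \<Rightarrow> real) \<Rightarrow> real" where
  "l2_dist_sq f g = l2_inner (\<lambda>x. f x - g x) (\<lambda>x. f x - g x)"

definition in_span :: "(nat \<Rightarrow> real \<Rightarrow> real) \<Rightarrow> nat \<Rightarrow> (real \<Rightarrow> real) \<Rightarrow> bool" where
  "in_span phi N f \<longleftrightarrow> (\<exists>c. f = (\<lambda>x. \<Sum>j<N. c j * phi j x))"

definition in_closed_span :: "(nat \<Rightarrow> real \<Rightarrow> real) \<Rightarrow> (real \<Rightarrow> real) \<Rightarrow> bool" where
  "in_closed_span phi f \<longleftrightarrow> (\<forall>e>0. \<exists>N g. in_span phi N g \<and> l2_dist_sq f g < e)"

lemma l2_dist_sq_nonneg: "l2_dist_sq f g \<ge> 0"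
  by (simp add: l2_dist_sq_def l2_inner_self_nonneg)

lemma l2_dist_sq_mult: "l2_dist_sq (\<lambda>x. c * f x) (\<lambda>x. c * g x) = c\<^sup>2 * l2_dist_sq f g"
proof -
  have "(\<lambda>x. (c * f x - c * g x) * (c * f x - c * g x)) = (\<lambda>x. c\<^sup>2 * ((f x - g x) * (f x - g x)))"
    by (simp add: fun_eq_iff power2_eq_square algebra_simps)
  then show ?thesis
    by (simp add: l2_dist_sq_def l2_inner_def)
qed

lemma l2_inner_add_self_le:
  assumes "a \<in> L2" "b \<in> L2"
  shows "l2_inner (\<lambda>x. a x + b x) (\<lambda>x. a x + b x) \<le> 2 * l2_inner a a + 2 * l2_inner b b"
proof -
  have "(a x + b x) * (a x + b x) \<le> 2 * (a x * a x) + 2 * (b x * b x)" for x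
    using sum_squares_bound[of "a x" "b x"] by (simp add: power2_eq_square algebra_simps)
  moreover have "integrable lebesgue01 (\<lambda>x. (a x + b x) * (a x + b x))"
    using L2_add[OF assms] by (intro integrable_L2_mult)
  moreover have "integrable lebesgue01 (\<lambda>x. 2 * (a x * a x) + 2 * (b x * b x))"
    using integrable_L2_mult[OF assms(1,1)] integrable_L2_mult[OF assms(2,2)] by simp
  ultimately have "l2_inner (\<lambda>x. a x + b x) (\<lambda>x. a x + b x)
      \<le> (LINT x|lebesgue01. 2 * (a x * a x) + 2 * (b x * b x))"
    unfolding l2_inner_def by (intro integral_mono)
  also have "\<dots> = 2 * l2_inner a a + 2 * l2_inner b b"
    using assms integrable_L2_mult by (simp add: l2_inner_def)
  finally show ?thesis .
qed

lemma l2_dist_sq_add_le: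
  assumes "f \<in> L2" "g \<in> L2" "u \<in> L2" "v \<in> L2"
  shows "l2_dist_sq (\<lambda>x. f x + g x) (\<lambda>x. u x + v x) \<le> 2 * l2_dist_sq f u + 2 * l2_dist_sq g v"
  using l2_inner_add_self_le[OF L2_diff[OF assms(1,3)] L2_diff[OF assms(2,4)]]
  by (simp add: l2_dist_sq_def algebra_simps)

lemma l2_dist_sq_triangle_le:
  assumes "f \<in> L2" "g \<in> L2" "h \<in> L2"
  shows "l2_dist_sq f h \<le> 2 * l2_dist_sq f g + 2 * l2_dist_sq g h"
  using l2_inner_add_self_le[OF L2_diff[OF assms(1,2)] L2_diff[OF assms(2,3)]]
  by (simp add: l2_dist_sq_def)

lemma in_span_mono:
  assumes "in_span phi N f" "N \<le> M"
  shows "in_span phi M f"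
proof -
  obtain c where f: "f = (\<lambda>x. \<Sum>j<N. c j * phi j x)"
    using assms(1) by (auto simp: in_span_def)
  have "f = (\<lambda>x. \<Sum>j<M. (if j < N then c j else 0) * phi j x)"
    unfolding f using assms(2) by (intro ext sum.mono_neutral_cong_left) auto
  then show ?thesis
    unfolding in_span_def by (intro exI[of _ "\<lambda>j. if j < N then c j else 0"])
qed

lemma in_span_L2: "orthonormal_seq phi \<Longrightarrow> in_span phi N f \<Longrightarrow> f \<in> L2"
  by (auto simp: in_span_def orthonormal_seq_def intro!: L2_sum L2_mult)

lemma in_span_basis: "j < N \<Longrightarrow> in_span phi N (phi j)"
  unfolding in_span_def
  by (rule exI[of _ "\<lambda>k. if k = j then 1 else 0"])
    (simp add: fun_eq_iff if_distrib[of "\<lambda>c. c * phi _ _"] cong: if_cong)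

lemma in_span_add:
  assumes "in_span phi N f" "in_span phi N g"
  shows "in_span phi N (\<lambda>x. f x + g x)"
proof -
  obtain c d where "f = (\<lambda>x. \<Sum>j<N. c j * phi j x)" "g = (\<lambda>x. \<Sum>j<N. d j * phi j x)"
    using assms by (auto simp: in_span_def)
  then show ?thesis
    unfolding in_span_def
    by (intro exI[of _ "\<lambda>j. c j + d j"]) (simp add: fun_eq_iff distrib_right sum.distrib)
qed

lemma in_span_mult:
  assumes "in_span phi N f"
  shows "in_span phi N (\<lambda>x. a * f x)"
proof -
  obtain c where "f = (\<lambda>x. \<Sum>j<N. c j * phi j x)"
    using assms by (auto simp: in_span_def)
  then show ?thesis
    unfolding in_span_def
    by (intro exI[of _ "\<lambda>j. a * c j"]) (simp add: fun_eq_iff sum_distrib_left mult.assoc)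
qed

lemma in_span_zero: "in_span phi N (\<lambda>x. 0)"
  unfolding in_span_def by (intro exI[of _ "\<lambda>_. 0"]) simp

lemma in_span_sum:
  "(\<And>i. i \<in> I \<Longrightarrow> in_span phi N (f i)) \<Longrightarrow> in_span phi N (\<lambda>x. \<Sum>i\<in>I. f i x)"
  by (induction I rule: infinite_finite_induct) (simp_all add: in_span_zero in_span_add)

lemma l2_dist_sq_self [simp]: "l2_dist_sq f f = 0"
  by (simp add: l2_dist_sq_def l2_inner_def)

lemma in_closed_span_if_in_span: "in_span phi N f \<Longrightarrow> in_closed_span phi f"
  unfolding in_closed_span_def by force

lemma in_closed_span_approx:
  assumes phi: "orthonormal_seq phi" and f: "f \<in> L2"
    and approx: "\<And>e. e > 0 \<Longrightarrow> \<exists>g. g \<in> L2 \<and> in_closed_span phi g \<and> l2_dist_sq f g < e"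
  shows "in_closed_span phi f"
  unfolding in_closed_span_def
proof (intro allI impI)
  fix e :: real assume "e > 0"
  then obtain g where g: "g \<in> L2" "in_closed_span phi g" "l2_dist_sq f g < e / 4"
    using approx[of "e / 4"] by auto
  then obtain N u where u: "in_span phi N u" "l2_dist_sq g u < e / 4"
    using \<open>e > 0\<close> unfolding in_closed_span_def by (meson divide_pos_pos zero_less_numeral)
  have "l2_dist_sq f u \<le> 2 * l2_dist_sq f g + 2 * l2_dist_sq g u"
    using f g in_span_L2[OF phi u(1)] by (intro l2_dist_sq_triangle_le)
  with g u have "l2_dist_sq f u < e"
    by linarith
  with u show "\<exists>N u. in_span phi N u \<and> l2_dist_sq f u < e"
    by blast
qed

lemma in_closed_span_add:
  assumes phi: "orthonormal_seq phi" and "f \<in> L2" "in_closed_span phi f" "g \<in> L2" "in_closed_span phi g"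
  shows "in_closed_span phi (\<lambda>x. f x + g x)"
  unfolding in_closed_span_def
proof (intro allI impI)
  fix e :: real assume "e > 0"
  then obtain N u M w where u: "in_span phi N u" "l2_dist_sq f u < e / 4"
    and w: "in_span phi M w" "l2_dist_sq g w < e / 4"
    using assms(3,5) unfolding in_closed_span_def by (meson divide_pos_pos zero_less_numeral)
  have "in_span phi (max N M) (\<lambda>x. u x + w x)"
    using u(1) w(1) by (intro in_span_add) (auto elim: in_span_mono)
  moreover have "l2_dist_sq (\<lambda>x. f x + g x) (\<lambda>x. u x + w x) < e"
    using l2_dist_sq_add_le[OF assms(2,4) in_span_L2[OF phi u(1)] in_span_L2[OF phi w(1)]] u w
    by linarith
  ultimately show "\<exists>N h. in_span phi N h \<and> l2_dist_sq (\<lambda>x. f x + g x) h < e"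
    by blast
qed

lemma in_closed_span_mult:
  assumes "in_closed_span phi f"
  shows "in_closed_span phi (\<lambda>x. c * f x)"
  unfolding in_closed_span_def
proof (intro allI impI)
  fix e :: real assume "e > 0"
  then have "e / (c\<^sup>2 + 1) > 0"
    by (simp add: add_nonneg_pos)
  then obtain N u where u: "in_span phi N u" "l2_dist_sq f u < e / (c\<^sup>2 + 1)"
    using assms unfolding in_closed_span_def by blast
  have "l2_dist_sq (\<lambda>x. c * f x) (\<lambda>x. c * u x) \<le> (c\<^sup>2 + 1) * l2_dist_sq f u"
    using l2_dist_sq_nonneg[of f u] by (simp add: l2_dist_sq_mult distrib_right)
  also have "\<dots> < e"
    using u(2) by (simp add: field_simps add_pos_nonneg)
  finally show "\<exists>N h. in_span phi N h \<and> l2_dist_sq (\<lambda>x. c * f x) h < e"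
    using in_span_mult[OF u(1)] by blast
qed

lemma in_closed_span_sum:
  assumes phi: "orthonormal_seq phi"
  shows "finite I \<Longrightarrow> (\<And>i. i \<in> I \<Longrightarrow> f i \<in> L2 \<and> in_closed_span phi (f i))
    \<Longrightarrow> in_closed_span phi (\<lambda>x. \<Sum>i\<in>I. f i x)"
proof (induction I rule: finite_induct)
  case empty
  show ?case
    using in_closed_span_if_in_span[OF in_span_zero] by simp
next
  case (insert a I)
  then show ?case
    by (simp add: in_closed_span_add[OF phi] L2_sum)
qed

lemma l2_dist_sq_partial_sum:
  assumes phi: "orthonormal_seq phi" and f: "f \<in> L2"
  shows "l2_dist_sq f (\<lambda>x. \<Sum>j<N. c j * phi j x)
    = l2_inner f f - 2 * (\<Sum>j<N. c j * l2_inner f (phi j)) + (\<Sum>j<N. (c j)\<^sup>2)"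
proof -
  define P where "P = (\<lambda>x. \<Sum>j<N. c j * phi j x)"
  have phiL2: "\<And>j. phi j \<in> L2"
    using phi by (simp add: orthonormal_seq_def)
  have P: "P \<in> L2"
    unfolding P_def by (intro L2_sum L2_mult phiL2)
  have fP: "l2_inner f P = (\<Sum>j<N. c j * l2_inner f (phi j))"
    unfolding P_def using f phiL2 by (simp add: l2_inner_sum_right)
  have "l2_inner P P = (\<Sum>j<N. c j * (\<Sum>k<N. c k * l2_inner (phi j) (phi k)))"
    unfolding P_def using phiL2 by (simp add: l2_inner_sum_left l2_inner_sum_right L2_sum L2_mult)
  also have "\<dots> = (\<Sum>j<N. c j * c j)"
  proof (intro sum.cong refl)
    fix j assume "j \<in> {..<N}"
    have "(\<Sum>k<N. c k * l2_inner (phi j) (phi k)) = (\<Sum>k<N. if k = j then c j else 0)"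
      using phi by (intro sum.cong) (auto simp: orthonormal_seq_def)
    then show "c j * (\<Sum>k<N. c k * l2_inner (phi j) (phi k)) = c j * c j"
      using \<open>j \<in> {..<N}\<close> by simp
  qed
  finally have PP: "l2_inner P P = (\<Sum>j<N. (c j)\<^sup>2)"
    by (simp add: power2_eq_square)
  have "l2_dist_sq f P = l2_inner f (\<lambda>x. f x - P x) - l2_inner P (\<lambda>x. f x - P x)"
    unfolding l2_dist_sq_def by (rule l2_inner_diff_left[OF f P L2_diff[OF f P]])
  also have "l2_inner f (\<lambda>x. f x - P x) = l2_inner f f - l2_inner P f"
    by (subst l2_inner_commute) (rule l2_inner_diff_left[OF f P f])
  also have "l2_inner P (\<lambda>x. f x - P x) = l2_inner f P - l2_inner P P"
    by (subst l2_inner_commute) (rule l2_inner_diff_left[OF f P P])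
  finally show ?thesis
    unfolding P_def[symmetric] using fP PP l2_inner_commute[of P f] by linarith
qed

lemma partial_sum_best_approximation:
  assumes phi: "orthonormal_seq phi" and f: "f \<in> L2"
  shows "l2_dist_sq f (\<lambda>x. \<Sum>j<N. l2_inner f (phi j) * phi j x) \<le> l2_dist_sq f (\<lambda>x. \<Sum>j<N. c j * phi j x)"
proof -
  define a where "a j = l2_inner f (phi j)" for j
  have "0 \<le> (\<Sum>j<N. (c j - a j)\<^sup>2)"
    by (simp add: sum_nonneg)
  also have "\<dots> = (\<Sum>j<N. (c j)\<^sup>2) - 2 * (\<Sum>j<N. c j * a j) + (\<Sum>j<N. (a j)\<^sup>2)"
    by (simp add: power2_diff sum.distrib sum_subtractf sum_distrib_left mult.assoc)
  finally show ?thesis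
    unfolding l2_dist_sq_partial_sum[OF phi f] a_def[symmetric]
    by (simp add: power2_eq_square)
qed

lemma in_closed_span_expansion:
  assumes phi: "orthonormal_seq phi" and f: "f \<in> L2" and span: "in_closed_span phi f"
  shows "(\<lambda>N. l2_norm (\<lambda>x. f x - (\<Sum>j<N. l2_inner f (phi j) * phi j x))) \<longlonglongrightarrow> 0"
proof -
  define d where "d N = l2_dist_sq f (\<lambda>x. \<Sum>j<N. l2_inner f (phi j) * phi j x)" for N
  have "d \<longlonglongrightarrow> 0"
  proof (rule LIMSEQ_I)
    fix e :: real assume "e > 0"
    then obtain N0 g where g: "in_span phi N0 g" "l2_dist_sq f g < e"
      using span unfolding in_closed_span_def by blast
    have "norm (d N - 0) < e" if N: "N \<ge> N0" for N
    proof -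
      obtain c where "g = (\<lambda>x. \<Sum>j<N. c j * phi j x)"
        using in_span_mono[OF g(1) N] unfolding in_span_def by blast
      then have "d N \<le> l2_dist_sq f g"
        unfolding d_def using partial_sum_best_approximation[OF phi f] by simp
      then show ?thesis
        using g(2) l2_dist_sq_nonneg by (simp add: d_def)
    qed
    then show "\<exists>N0. \<forall>N\<ge>N0. norm (d N - 0) < e" by blast
  qed
  then have "(\<lambda>N. sqrt (d N)) \<longlonglongrightarrow> sqrt 0"
    by (intro tendsto_real_sqrt)
  then show ?thesis
    by (simp add: d_def l2_dist_sq_def l2_norm_def)
qed

lemma mem_part_int:
  assumes "N > 0"
  shows "x \<in> part_int N q \<longleftrightarrow> \<lfloor>x * real N\<rfloor> = int q"
proof -
  have "x \<in> part_int N q \<longleftrightarrow> real q \<le> x * real N \<and> x * real N < real q + 1"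
    using assms by (auto simp: part_int_def field_simps)
  also have "\<dots> \<longleftrightarrow> \<lfloor>x * real N\<rfloor> = int q"
    by (simp add: floor_eq_iff)
  finally show ?thesis .
qed

lemma part_int_nested:
  assumes "N > 0" "c > 0" "x \<in> part_int (N * c) q"
  shows "x \<in> part_int N (q div c)"
proof -
  have "\<lfloor>x * real N\<rfloor> = \<lfloor>x * real (N * c) / real_of_int (int c)\<rfloor>"
    using assms(2) by simp
  also have "\<dots> = \<lfloor>x * real (N * c)\<rfloor> div int c"
    by (rule floor_divide_real_eq_div) simp
  also have "\<dots> = int (q div c)"
    using assms by (simp add: mem_part_int zdiv_int)
  finally show ?thesis
    using assms(1) by (simp add: mem_part_int)
qed

lemma indicator_part_int_mult_nested:
  assumes "N > 0" "c > 0"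
  shows "indicator (part_int N r) x * indicator (part_int (N * c) q) x
    = (if r = q div c then indicator (part_int (N * c) q) x else (0::real))"
proof -
  have "x \<in> part_int N r \<longleftrightarrow> r = q div c" if "x \<in> part_int (N * c) q"
    using part_int_nested[OF assms that] assms(1) by (auto simp: mem_part_int)
  then show ?thesis
    by (auto simp: indicator_def)
qed

lemma indicator_part_int_mult:
  assumes "N > 0"
  shows "indicator (part_int N r) x * indicator (part_int N q) x
    = (if r = q then indicator (part_int N q) x else (0::real))"
  using indicator_part_int_mult_nested[OF assms, of 1] by simp

lemma indicator_part_int_split:
  assumes "N > 0"
  shows "indicator (part_int N q) x
    = indicator (part_int (2 * N) (2 * q)) x + (indicator (part_int (2 * N) (Suc (2 * q))) x :: real)"
proof -
  have "x \<in> part_int N q \<longleftrightarrow> x \<in> part_int (2 * N) (2 * q) \<or> x \<in> part_int (2 * N) (Suc (2 * q))"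
    using assms by (auto simp: part_int_def field_simps)
  moreover have "\<not> (x \<in> part_int (2 * N) (2 * q) \<and> x \<in> part_int (2 * N) (Suc (2 * q)))"
    using assms by (auto simp: mem_part_int)
  ultimately show ?thesis
    by (auto simp: indicator_def)
qed

lemma part_int_subset:
  assumes "q < N"
  shows "part_int N q \<subseteq> {0..<1}"
proof -
  have "real (Suc q) \<le> real N"
    using assms by linarith
  then show ?thesis
    using assms by (auto simp: part_int_def field_simps)
qed

lemma part_int_sets: "q < N \<Longrightarrow> part_int N q \<in> sets lebesgue01"
proof -
  assume "q < N"
  then have "part_int N q \<subseteq> {0..1}"
    by (rule order_trans[OF part_int_subset]) auto
  then show ?thesis
    unfolding part_int_def by (auto simp: sets_restrict_space_iff)
qed

lemma measure_part_int:
  assumes "q < N"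
  shows "measure lebesgue01 (part_int N q) = 1 / real N"
proof -
  have "real (Suc q) \<le> real N"
    using assms by linarith
  then have "measure lebesgue01 (part_int N q) = real (Suc q) / real N - real q / real N"
    unfolding part_int_def using assms by (intro measure_lebesgue01_Ico) (auto simp: field_simps)
  then show ?thesis
    by (simp add: diff_divide_distrib[symmetric])
qed

lemma integral_indicator_part_int:
  "q < N \<Longrightarrow> (LINT x|lebesgue01. indicator (part_int N q) x) = 1 / real N"
  using sets.Int_space_eq2[OF part_int_sets] by (simp add: measure_part_int)

lemma L2_indicator_part_int: "indicator (part_int N q) \<in> L2"
  by (rule L2_bounded[of _ 1]) (auto simp: part_int_def borel_measurable_indicator_iff
      sets_restrict_space_iff indicator_def)

lemma l2_inner_indicator_part_int:
  assumes "r < N"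
  shows "l2_inner (indicator (part_int N r)) (indicator (part_int N q)) = (if r = q then 1 / real N else 0)"
proof -
  have "l2_inner (indicator (part_int N r)) (indicator (part_int N q))
      = (LINT x|lebesgue01. (if r = q then indicator (part_int N q) x else 0))"
    using assms by (simp add: l2_inner_def indicator_part_int_mult)
  then show ?thesis
    using integral_indicator_part_int[OF assms] by (cases "r = q") simp_all
qed

lemma part_int_diameter:
  assumes "N > 0" "x \<in> part_int N q" "y \<in> part_int N q"
  shows "\<bar>y - x\<bar> < 1 / real N"
proof -
  have "\<bar>y * real N - x * real N\<bar> < 1"
    using mem_part_int[OF assms(1), of x q] mem_part_int[OF assms(1), of y q] assms(2,3)
    by (simp add: floor_eq_iff) linarith
  then have "\<bar>y - x\<bar> * real N < 1"
    using assms(1) by (simp add: left_diff_distrib[symmetric] abs_mult)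
  then show ?thesis
    using assms(1) by (simp add: field_simps)
qed

lemma part_int_cover:
  assumes "N > 0" "0 \<le> x" "x < 1"
  obtains q where "q < N" "x \<in> part_int N q"
proof
  define q where "q = nat \<lfloor>x * real N\<rfloor>"
  have q: "\<lfloor>x * real N\<rfloor> = int q"
    using assms by (simp add: q_def)
  then show "x \<in> part_int N q"
    using assms(1) by (simp add: mem_part_int)
  have "x * real N < real N"
    using assms by simp
  then show "q < N"
    using q by linarith
qed

subsection \<open>Step functions\<close>

text \<open>\<open>step_embed n\<close> is the isometry of \<open>\<real>\<^sup>n\<close> onto the step functions on the partition into
  \<open>n\<close> intervals that maps the standard basis to the normalised indicators \<open>sqrt n \<chi>\<^bsub>P\<^sub>i\<^esub>\<close>;
  \<open>step_coeffs n\<close> is its adjoint.\<close>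

definition step_embed :: "nat \<Rightarrow> (nat \<Rightarrow> real) \<Rightarrow> real \<Rightarrow> real" where
  "step_embed n a x = (\<Sum>i<n. sqrt (real n) * a i * indicator (part_int n i) x)"

definition step_coeffs :: "nat \<Rightarrow> (real \<Rightarrow> real) \<Rightarrow> nat \<Rightarrow> real" where
  "step_coeffs n f i = sqrt (real n) * l2_inner (indicator (part_int n i)) f"

lemma step_embed_L2: "step_embed n a \<in> L2"
  unfolding step_embed_def[abs_def] by (intro L2_sum L2_mult L2_indicator_part_int)

lemma step_embed_cong: "(\<And>i. i < n \<Longrightarrow> a i = b i) \<Longrightarrow> step_embed n a = step_embed n b"
  by (simp add: step_embed_def[abs_def])

lemma step_embed_lincomb:
  "(\<Sum>j\<in>J. c j * step_embed n (a j) x) = step_embed n (\<lambda>i. \<Sum>j\<in>J. c j * a j i) x"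
  by (simp add: step_embed_def sum_distrib_left sum_distrib_right mult_ac sum.swap[of _ J])

lemma l2_inner_step_embed_left:
  assumes "f \<in> L2"
  shows "l2_inner (step_embed n a) f = dot n a (step_coeffs n f)"
  unfolding step_embed_def[abs_def]
  by (subst l2_inner_sum_left) (simp_all add: assms L2_indicator_part_int dot_def step_coeffs_def mult_ac)

lemma step_coeffs_step_embed:
  assumes "i < n"
  shows "step_coeffs n (step_embed n a) i = a i"
proof -
  have "step_coeffs n (step_embed n a) i
      = sqrt (real n) * (\<Sum>k<n. sqrt (real n) * a k * (if i = k then 1 / real n else 0))"
    unfolding step_coeffs_def step_embed_def[abs_def] using assms
    by (subst l2_inner_sum_right) (simp_all add: L2_indicator_part_int l2_inner_indicator_part_int)
  also have "\<dots> = a i"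
    using assms by (simp add: if_distrib[of "\<lambda>c. _ * c"] mult.assoc[symmetric] cong: if_cong)
  finally show ?thesis .
qed

lemma l2_inner_step_embed: "l2_inner (step_embed n a) (step_embed n b) = dot n a b"
  by (simp add: l2_inner_step_embed_left step_embed_L2 dot_def step_coeffs_step_embed)

lemma step_coeffs_mult: "step_coeffs n (\<lambda>x. c * f x) i = c * step_coeffs n f i"
  by (simp add: step_coeffs_def l2_inner_commute[of "indicator _"] l2_inner_mult_left)

lemma step_coeffs_cong_AE:
  assumes "f \<in> borel_measurable lebesgue01" "g \<in> borel_measurable lebesgue01"
    "AE x in lebesgue01. f x = g x"
  shows "step_coeffs n f = step_coeffs n g"
  using l2_inner_cong_AE[OF assms(1,2) L2_borel_measurable[OF L2_indicator_part_int] assms(3)]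
  by (simp add: step_coeffs_def[abs_def] l2_inner_commute[of "indicator _"])

lemma integral_op_induced_graphon:
  assumes "f \<in> L2"
  shows "integral_op (induced_graphon n (\<lambda>i j. real n * B i j)) f
    = step_embed n (mat_vec n B (step_coeffs n f))"
proof
  fix v
  have "integral_op (induced_graphon n (\<lambda>i j. real n * B i j)) f v
      = (LINT u|lebesgue01. (\<Sum>i<n. \<Sum>j<n. (real n * B i j * indicator (part_int n i) v)
          * (indicator (part_int n j) u * f u)))"
    unfolding integral_op_def induced_graphon_def
    by (intro Bochner_Integration.integral_cong refl) (simp add: sum_distrib_left sum_distrib_right mult_ac)
  also have "\<dots> = (\<Sum>i<n. \<Sum>j<n. real n * B i j * indicator (part_int n i) v
      * l2_inner (indicator (part_int n j)) f)"
    using integrable_L2_mult[OF L2_indicator_part_int assms] unfolding l2_inner_def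
    by (subst Bochner_Integration.integral_sum)
      (auto intro!: sum.cong Bochner_Integration.integral_sum simp: integral_mult_right_zero)
  also have "\<dots> = step_embed n (mat_vec n B (step_coeffs n f)) v"
  proof -
    have sq: "sqrt (real n) * (sqrt (real n) * y) = real n * y" for y
      by (simp add: mult.assoc[symmetric])
    show ?thesis
      by (simp add: step_embed_def mat_vec_def step_coeffs_def sum_distrib_left sum_distrib_right
          sq mult_ac)
  qed
  finally show "integral_op (induced_graphon n (\<lambda>i j. real n * B i j)) f v
      = step_embed n (mat_vec n B (step_coeffs n f)) v" .
qed

definition haar :: "nat \<Rightarrow> nat \<Rightarrow> real \<Rightarrow> real" where
  "haar N q x = sqrt (real N) *
     (indicator (part_int (2 * N) (2 * q)) x - indicator (part_int (2 * N) (Suc (2 * q))) x)"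

lemma haar_L2: "haar N q \<in> L2"
  unfolding haar_def[abs_def] by (intro L2_mult L2_diff L2_indicator_part_int)

lemma integral_haar:
  assumes "q < N"
  shows "(LINT x|lebesgue01. haar N q x) = 0"
proof -
  have "2 * q < 2 * N" "Suc (2 * q) < 2 * N"
    using assms by auto
  then show ?thesis
    unfolding haar_def
    using integrable_L2[OF L2_indicator_part_int] integral_indicator_part_int
    by (simp del: integral_indicator)
qed

lemma indicator_part_int_mult_haar:
  assumes "N > 0" "c > 0"
  shows "indicator (part_int N r) x * haar (N * c) q x = (if r = q div c then haar (N * c) q x else 0)"
proof -
  have eq: "N * (2 * c) = 2 * (N * c)"
    by simp
  have nested: "indicator (part_int N r) x * indicator (part_int (2 * (N * c)) r') x
      = (if r = r' div (2 * c) then indicator (part_int (2 * (N * c)) r') x else (0::real))" for r'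
    using indicator_part_int_mult_nested[OF assms(1), of "2 * c" r x r'] assms(2) unfolding eq by simp
  have "2 * q div (2 * c) = q div c" "Suc (2 * q) div (2 * c) = q div c"
    by (simp_all add: div_mult2_eq)
  then show ?thesis
    unfolding haar_def right_diff_distrib mult.left_commute[of "indicator _ x" "sqrt _"] nested
    by simp
qed

lemma l2_inner_indicator_haar:
  assumes "N > 0" "c > 0" "q < N * c"
  shows "l2_inner (indicator (part_int N r)) (haar (N * c) q) = 0"
  using integral_haar[OF assms(3)]
  by (cases "r = q div c") (simp_all add: l2_inner_def indicator_part_int_mult_haar[OF assms(1,2)])

lemma step_coeffs_haar:
  assumes "N > 0" "c > 0" "q < N * c"
  shows "step_coeffs N (haar (N * c) q) = (\<lambda>i. 0)"
  by (simp add: step_coeffs_def[abs_def] l2_inner_indicator_haar[OF assms])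

lemma l2_inner_haar_left:
  assumes "g \<in> L2"
  shows "l2_inner (haar N q) g = sqrt (real N) *
    (l2_inner (indicator (part_int (2 * N) (2 * q))) g - l2_inner (indicator (part_int (2 * N) (Suc (2 * q)))) g)"
  unfolding haar_def[abs_def] l2_inner_mult_left
  using assms by (simp add: l2_inner_diff_left L2_indicator_part_int)

lemma l2_inner_haar_same_level:
  assumes "q < N" "q' < N"
  shows "l2_inner (haar N q) (haar N q') = (if q = q' then 1 else 0)"
proof -
  have inner: "l2_inner (indicator (part_int (2 * N) r)) (haar N q')
      = sqrt (real N) * ((if 2 * q' = r then 1 / (2 * real N) else 0)
          - (if Suc (2 * q') = r then 1 / (2 * real N) else 0))" for r
  proof -
    have "l2_inner (indicator (part_int (2 * N) r)) (haar N q')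
        = l2_inner (haar N q') (indicator (part_int (2 * N) r))"
      by (rule l2_inner_commute)
    also have "\<dots> = sqrt (real N) * (l2_inner (indicator (part_int (2 * N) (2 * q'))) (indicator (part_int (2 * N) r))
        - l2_inner (indicator (part_int (2 * N) (Suc (2 * q')))) (indicator (part_int (2 * N) r)))"
      by (rule l2_inner_haar_left[OF L2_indicator_part_int])
    finally show ?thesis
      using assms(2) by (simp add: l2_inner_indicator_part_int)
  qed
  have "2 * q' \<noteq> Suc (2 * q)" "Suc (2 * q') \<noteq> 2 * q"
    by presburger+
  then show ?thesis
    using assms unfolding l2_inner_haar_left[OF haar_L2] inner
    by (simp add: algebra_simps flip: mult.assoc)
qed

lemma l2_inner_haar_finer_level:
  assumes "N > 0" "c > 0" "q' < 2 * N * c"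
  shows "l2_inner (haar N q) (haar (2 * N * c) q') = 0"
  using assms by (simp add: l2_inner_haar_left haar_L2 l2_inner_indicator_haar)

lemma l2_inner_step_embed_haar:
  assumes "N > 0" "c > 0" "q < N * c"
  shows "l2_inner (step_embed N a) (haar (N * c) q) = 0"
  by (simp add: l2_inner_step_embed_left haar_L2 step_coeffs_haar[OF assms] dot_def)

subsection \<open>An orthonormal basis of step functions and Haar functions\<close>

text \<open>The first \<open>m\<close> members are the step functions of an orthonormal basis \<open>u\<close> of \<open>\<real>\<^sup>m\<close>;
  the indices \<open>m 2\<^sup>k \<le> j < m 2\<^sup>k\<^sup>+\<^sup>1\<close> enumerate the Haar functions \<open>haar (m 2\<^sup>k) q\<close>.\<close>

definition haar_level :: "nat \<Rightarrow> nat \<Rightarrow> nat" where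
  "haar_level m j = (LEAST k. j < m * 2 ^ Suc k)"

definition step_haar_basis :: "nat \<Rightarrow> (nat \<Rightarrow> nat \<Rightarrow> real) \<Rightarrow> nat \<Rightarrow> real \<Rightarrow> real" where
  "step_haar_basis m u j =
     (if j < m then step_embed m (u j)
      else haar (m * 2 ^ haar_level m j) (j - m * 2 ^ haar_level m j))"

lemma haar_level_eq:
  assumes "q < m * 2 ^ k"
  shows "haar_level m (m * 2 ^ k + q) = k"
  unfolding haar_level_def
proof (rule Least_equality)
  show "m * 2 ^ k + q < m * 2 ^ Suc k"
    using assms by simp
  fix k' assume "m * 2 ^ k + q < m * 2 ^ Suc k'"
  then have "m * 2 ^ k < m * 2 ^ Suc k'"
    by linarith
  then have "(2::nat) ^ k < 2 ^ Suc k'"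
    by simp
  then show "k \<le> k'"
    using power_less_imp_less_exp[of "2::nat" k "Suc k'"] by simp
qed

lemma step_haar_basis_haar:
  assumes "m > 0" "q < m * 2 ^ k"
  shows "step_haar_basis m u (m * 2 ^ k + q) = haar (m * 2 ^ k) q"
proof -
  have "\<not> m * 2 ^ k + q < m"
    by (simp add: not_less trans_le_add1)
  then show ?thesis
    using haar_level_eq[OF assms(2)] by (simp add: step_haar_basis_def)
qed

lemma step_haar_basis_index_cases:
  fixes m j :: nat
  assumes "m > 0" "m \<le> j"
  obtains k q where "q < m * 2 ^ k" "j = m * 2 ^ k + q"
proof -
  define k where "k = haar_level m j"
  have "j < m * 2 ^ Suc j"
    using assms(1) less_exp[of j] by (simp add: less_le_trans[of _ "2 ^ j"] mult_le_mono)
  then have upper: "j < m * 2 ^ Suc k"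
    unfolding k_def haar_level_def by (rule LeastI)
  have "m * 2 ^ k \<le> j"
  proof (cases k)
    case (Suc k')
    have "\<not> j < m * 2 ^ Suc k'"
      using Least_le[of "\<lambda>k. j < m * 2 ^ Suc k" k'] Suc by (auto simp: k_def haar_level_def)
    then show ?thesis
      using Suc by simp
  qed (use assms in simp)
  then show ?thesis
    using that[of "j - m * 2 ^ k" k] upper by simp
qed

lemma l2_inner_haar_levels:
  assumes "m > 0" "q < m * 2 ^ k" "q' < m * 2 ^ k'"
  shows "l2_inner (haar (m * 2 ^ k) q) (haar (m * 2 ^ k') q') = (if k = k' \<and> q = q' then 1 else 0)"
proof (cases k k' rule: linorder_cases)
  case less
  then have eq: "m * 2 ^ k' = 2 * (m * 2 ^ k) * 2 ^ (k' - Suc k)"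
    by (simp flip: power_Suc power_add)
  have "l2_inner (haar (m * 2 ^ k) q) (haar (2 * (m * 2 ^ k) * 2 ^ (k' - Suc k)) q') = 0"
    using assms eq by (intro l2_inner_haar_finer_level) simp_all
  then show ?thesis
    using less unfolding eq by simp
next
  case greater
  then have eq: "m * 2 ^ k = 2 * (m * 2 ^ k') * 2 ^ (k - Suc k')"
    by (simp flip: power_Suc power_add)
  have "l2_inner (haar (m * 2 ^ k') q') (haar (2 * (m * 2 ^ k') * 2 ^ (k - Suc k')) q) = 0"
    using assms eq by (intro l2_inner_haar_finer_level) simp_all
  then show ?thesis
    using greater unfolding eq by (simp add: l2_inner_commute)
qed (use assms in \<open>simp add: l2_inner_haar_same_level\<close>)

lemma orthonormal_seq_step_haar_basis:
  assumes m: "m > 0" and u: "orthonormal_on m {..<m} u"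
  shows "orthonormal_seq (step_haar_basis m u)"
proof -
  have step: "l2_inner (step_embed m (u j)) (haar (m * 2 ^ k) q) = 0" if "q < m * 2 ^ k" for j k q
    using m that by (simp add: l2_inner_step_embed_haar)
  have "l2_inner (step_haar_basis m u j) (step_haar_basis m u j') = (if j = j' then 1 else 0)" for j j'
  proof (cases "j < m"; cases "j' < m")
    assume "j < m" "j' < m"
    then show ?thesis
      using u by (simp add: step_haar_basis_def l2_inner_step_embed orthonormal_on_def)
  next
    assume "j < m" "\<not> j' < m"
    then have "m \<le> j'" by simp
    then obtain k' q' where "q' < m * 2 ^ k'" "j' = m * 2 ^ k' + q'"
      by (rule step_haar_basis_index_cases[OF m])
    then show ?thesis
      using \<open>j < m\<close> \<open>m \<le> j'\<close> m step
      by (simp add: step_haar_basis_haar step_haar_basis_def[of m u j])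
  next
    assume "\<not> j < m" "j' < m"
    then have "m \<le> j" by simp
    then obtain k q where "q < m * 2 ^ k" "j = m * 2 ^ k + q"
      by (rule step_haar_basis_index_cases[OF m])
    then show ?thesis
      using \<open>j' < m\<close> \<open>m \<le> j\<close> m step
      by (simp add: step_haar_basis_haar step_haar_basis_def[of m u j'] l2_inner_commute[of "haar _ _"])
  next
    assume "\<not> j < m" "\<not> j' < m"
    then have "m \<le> j" "m \<le> j'" by simp_all
    obtain k q where kq: "q < m * 2 ^ k" "j = m * 2 ^ k + q"
      by (rule step_haar_basis_index_cases[OF m \<open>m \<le> j\<close>])
    moreover obtain k' q' where kq': "q' < m * 2 ^ k'" "j' = m * 2 ^ k' + q'"
      by (rule step_haar_basis_index_cases[OF m \<open>m \<le> j'\<close>])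
    moreover have "j = j' \<longleftrightarrow> k = k' \<and> q = q'"
      using kq kq' haar_level_eq[of q m k] haar_level_eq[of q' m k'] by auto
    ultimately show ?thesis
      using m by (simp add: step_haar_basis_haar l2_inner_haar_levels)
  qed
  moreover have "step_haar_basis m u j \<in> L2" for j
    by (simp add: step_haar_basis_def step_embed_L2 haar_L2)
  ultimately show ?thesis
    by (simp add: orthonormal_seq_def)
qed

lemma indicator_part_int_eq_step_embed:
  assumes "q < n"
  shows "indicator (part_int n q) x = step_embed n (\<lambda>i. if i = q then 1 / sqrt (real n) else 0) x"
  using assms by (simp add: step_embed_def if_distrib[of "\<lambda>c. _ * c * _"] cong: if_cong)

lemma indicator_part_int_in_span:
  assumes m: "m > 0" and u: "orthonormal_on m {..<m} u"
  shows "q < m * 2 ^ K \<Longrightarrow> in_span (step_haar_basis m u) (m * 2 ^ K) (indicator (part_int (m * 2 ^ K) q))"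
proof (induction K arbitrary: q)
  case 0
  then have q: "q < m" by simp
  have "indicator (part_int m q) x = (\<Sum>j<m. (u j q / sqrt (real m)) * step_haar_basis m u j x)" for x
  proof -
    have "(\<Sum>j<m. (u j q / sqrt (real m)) * step_haar_basis m u j x)
        = (\<Sum>j<m. (u j q / sqrt (real m)) * step_embed m (u j) x)"
      by (intro sum.cong refl) (simp add: step_haar_basis_def)
    also have "\<dots> = step_embed m (\<lambda>i. \<Sum>j<m. (u j q / sqrt (real m)) * u j i) x"
      by (rule step_embed_lincomb)
    also have "\<dots> = step_embed m (\<lambda>i. if i = q then 1 / sqrt (real m) else 0) x"
    proof (rule arg_cong[where f = "\<lambda>a. a x"], rule step_embed_cong)
      fix i assume "i < m"
      have "(if q = i then 1 else 0) = (\<Sum>j<m. u j i * u j q)"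
        using orthonormal_basis_expansion[OF u q, of "\<lambda>k. if k = i then 1 else 0"] \<open>i < m\<close>
        by (simp add: dot_unit_left)
      then show "(\<Sum>j<m. (u j q / sqrt (real m)) * u j i) = (if i = q then 1 / sqrt (real m) else 0)"
        by (auto simp: sum_divide_distrib[symmetric] mult.commute)
    qed
    finally show ?thesis
      using indicator_part_int_eq_step_embed[OF q] by simp
  qed
  then show ?case
    unfolding in_span_def by (intro exI[of _ "\<lambda>j. u j q / sqrt (real m)"]) auto
next
  case (Suc K r)
  define N where "N = m * 2 ^ K"
  define q where "q = r div 2"
  have N: "N > 0" "m * 2 ^ Suc K = 2 * N"
    using m by (simp_all add: N_def)
  have q: "q < N" "r = 2 * q \<or> r = Suc (2 * q)"
    using Suc.prems by (auto simp: q_def N_def)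
  have coarse: "in_span (step_haar_basis m u) (2 * N) (indicator (part_int N q))"
    using in_span_mono[OF Suc.IH] q(1) by (simp add: N_def)
  have "in_span (step_haar_basis m u) (2 * N) (haar N q)"
    using in_span_basis[of "N + q" "2 * N" "step_haar_basis m u"] q(1) m
    by (simp add: N_def step_haar_basis_haar)
  then have span: "in_span (step_haar_basis m u) (2 * N)
      (\<lambda>x. 1 / 2 * indicator (part_int N q) x + s * (1 / (2 * sqrt (real N))) * haar N q x)" for s
    using coarse by (intro in_span_add in_span_mult)
  have halves: "indicator (part_int (2 * N) (2 * q))
      = (\<lambda>x. 1 / 2 * indicator (part_int N q) x + 1 * (1 / (2 * sqrt (real N))) * haar N q x)"
    "indicator (part_int (2 * N) (Suc (2 * q)))
      = (\<lambda>x. 1 / 2 * indicator (part_int N q) x + (- 1) * (1 / (2 * sqrt (real N))) * haar N q x)"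
    using N(1) by (simp_all add: fun_eq_iff indicator_part_int_split[OF N(1), of q] haar_def field_simps)
  from q(2) show ?case
  proof
    assume "r = 2 * q"
    then show ?case
      unfolding N(2) by (simp only: halves(1) span)
  next
    assume "r = Suc (2 * q)"
    then show ?case
      unfolding N(2) by (simp only: halves(2) span)
  qed
qed

subsection \<open>Completeness of the step and Haar basis\<close>

lemma l2_dist_sq_indicator:
  assumes "S \<in> sets lebesgue01" "U \<in> sets lebesgue01"
  shows "l2_dist_sq (indicator S) (indicator U) = measure lebesgue01 (sym_diff S U)"
proof -
  have "(\<lambda>x. (indicator S x - indicator U x) * (indicator S x - indicator U x))
      = (indicator (sym_diff S U) :: real \<Rightarrow> real)"
    by (auto simp: fun_eq_iff indicator_def)
  moreover have "sym_diff S U \<inter> {0..1} = sym_diff S U"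
    using sets.sets_into_space[OF assms(1)] sets.sets_into_space[OF assms(2)] by auto
  ultimately show ?thesis
    by (simp add: l2_dist_sq_def l2_inner_def)
qed

lemma measure_dyadic_cells_inside_open:
  assumes m: "m > 0" and T: "open T"
  defines "U \<equiv> \<lambda>K. \<Union>q\<in>{q. q < m * 2 ^ K \<and> part_int (m * 2 ^ K) q \<subseteq> T}. part_int (m * 2 ^ K) q"
  shows "(\<lambda>K. measure lebesgue01 (U K)) \<longlonglongrightarrow> measure lebesgue01 (T \<inter> {0..<1})"
proof -
  have U_sets: "U K \<in> sets lebesgue01" for K
    unfolding U_def by (intro sets.finite_UN) (auto intro: part_int_sets)
  have "incseq U"
  proof (rule incseq_SucI, rule subsetI)
    fix K x assume "x \<in> U K"
    then obtain q where q: "q < m * 2 ^ K" "part_int (m * 2 ^ K) q \<subseteq> T" "x \<in> part_int (m * 2 ^ K) q"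
      by (auto simp: U_def)
    define N where "N = m * 2 ^ K"
    have N: "N > 0" "m * 2 ^ Suc K = N * 2"
      using m by (simp_all add: N_def)
    have children: "part_int (N * 2) r \<subseteq> part_int N q" if "r div 2 = q" for r
      using part_int_nested[OF N(1), of 2 _ r] that by auto
    have "x \<in> part_int (N * 2) (2 * q) \<or> x \<in> part_int (N * 2) (Suc (2 * q))"
      using indicator_part_int_split[OF N(1), of q x] q(3)
      by (auto simp: N_def mult.commute[of _ 2] indicator_def split: if_splits)
    moreover have "2 * q div 2 = q" "Suc (2 * q) div 2 = q"
      by simp_all
    ultimately obtain r where r: "r div 2 = q" "x \<in> part_int (N * 2) r"
      by blast
    have "r < N * 2"
      using r(1) q(1) by (simp add: N_def div_less_iff_less_mult)
    moreover have "part_int (N * 2) r \<subseteq> T"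
      using children[OF r(1)] q(2) by (simp add: N_def)
    ultimately show "x \<in> U (Suc K)"
      unfolding U_def N(2) using r(2) by blast
  qed
  moreover have "(\<Union>K. U K) = T \<inter> {0..<1}"
  proof
    show "(\<Union>K. U K) \<subseteq> T \<inter> {0..<1}"
      unfolding U_def using part_int_subset by blast
    show "T \<inter> {0..<1} \<subseteq> (\<Union>K. U K)"
    proof
      fix x assume x: "x \<in> T \<inter> {0..<1}"
      obtain r where r: "r > 0" "ball x r \<subseteq> T"
        using openE[OF T] x by blast
      obtain K where K: "(1 / 2) ^ K < r"
        using real_arch_pow_inv[OF r(1), of "1 / 2"] by auto
      obtain q where q: "q < m * 2 ^ K" "x \<in> part_int (m * 2 ^ K) q"
        using part_int_cover[of "m * 2 ^ K" x] m x by auto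
      have "1 / real (m * 2 ^ K) \<le> (1 / 2) ^ K"
        using m by (simp add: power_one_over field_simps)
      then have "part_int (m * 2 ^ K) q \<subseteq> ball x r"
        using part_int_diameter[of "m * 2 ^ K" x q] q(2) K m
        by (force simp: dist_real_def abs_minus_commute)
      then show "x \<in> (\<Union>K. U K)"
        using q r(2) by (auto simp: U_def)
    qed
  qed
  ultimately show ?thesis
    using finite_measure.finite_Lim_measure_incseq[OF finite_measure_lebesgue01, of U] U_sets
    by auto
qed

lemma dyadic_cells_approximate_set:
  assumes m: "m > 0" and S: "S \<in> sets lebesgue01" and e: "e > 0"
  shows "\<exists>K A. A \<subseteq> {..<m * 2 ^ K}
    \<and> measure lebesgue01 (sym_diff S (\<Union>q\<in>A. part_int (m * 2 ^ K) q)) < e"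
proof -
  have S01: "S \<subseteq> {0..1}" and "S \<in> sets lebesgue"
    using S by (auto simp: sets_restrict_space_iff)
  then obtain T where T: "open T" "S \<subseteq> T" "T - S \<in> lmeasurable"
    and small: "emeasure lebesgue (T - S) < ennreal (e / 2)"
    using sets_lebesgue_outer_open[of S "e / 2"] e by auto
  have "measure lebesgue (T - S) < e / 2"
    using small emeasure_eq_measure2[OF T(3)] e by (simp add: ennreal_less_iff)
  moreover have "measure lebesgue01 ((T - S) \<inter> {0..1}) \<le> measure lebesgue (T - S)"
    using T(3) by (simp add: measure_restrict_space fmeasurableD)
      (rule measure_mono_fmeasurable, auto simp: fmeasurableD)
  ultimately have TS: "measure lebesgue01 ((T - S) \<inter> {0..1}) < e / 2"
    by linarith
  define A where "A K = {q. q < m * 2 ^ K \<and> part_int (m * 2 ^ K) q \<subseteq> T}" for K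
  define U where "U K = (\<Union>q\<in>A K. part_int (m * 2 ^ K) q)" for K
  obtain K where "norm (measure lebesgue01 (U K) - measure lebesgue01 (T \<inter> {0..<1})) < e / 2"
    using LIMSEQ_D[OF measure_dyadic_cells_inside_open[OF m T(1)], of "e / 2"] e
    by (auto simp: U_def A_def)
  then have TU: "measure lebesgue01 (T \<inter> {0..<1}) - measure lebesgue01 (U K) < e / 2"
    by (simp only: real_norm_def abs_less_iff) linarith
  have T01: "T \<inter> {0..<1} \<in> sets lebesgue01"
    using T(1) by (auto simp: sets_restrict_space_iff borel_open)
  have U: "U K \<in> sets lebesgue01" "U K \<subseteq> T \<inter> {0..<1}"
    unfolding U_def A_def using part_int_subset
    by (auto intro!: sets.finite_UN part_int_sets)
  have one: "{1::real} \<in> sets lebesgue01"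
    by (simp add: sets_restrict_space_iff)
  have TS_sets: "(T - S) \<inter> {0..1} \<in> sets lebesgue01"
    using fmeasurableD[OF T(3)] by (auto simp: sets_restrict_space_iff)
  have "sym_diff S (U K) \<subseteq> (T \<inter> {0..<1} - U K) \<union> {1} \<union> (T - S) \<inter> {0..1}"
    using S01 T(2) U(2) by auto
  then have "measure lebesgue01 (sym_diff S (U K))
      \<le> measure lebesgue01 ((T \<inter> {0..<1} - U K) \<union> {1} \<union> (T - S) \<inter> {0..1})"
    by (intro finite_measure.finite_measure_mono[OF finite_measure_lebesgue01] sets.Un sets.Diff
        T01 U(1) one TS_sets)
  also have "\<dots> \<le> measure lebesgue01 (T \<inter> {0..<1} - U K) + measure lebesgue01 {1::real}
      + measure lebesgue01 ((T - S) \<inter> {0..1})"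
    by (intro order_trans[OF measure_Un_le] add_mono measure_Un_le order_refl sets.Un sets.Diff
        T01 U(1) one TS_sets)
  also have "measure lebesgue01 (T \<inter> {0..<1} - U K)
      = measure lebesgue01 (T \<inter> {0..<1}) - measure lebesgue01 (U K)"
    using finite_measure.finite_measure_Diff[OF finite_measure_lebesgue01 T01 U(1) U(2)] .
  also have "measure lebesgue01 {1::real} = 0"
    by (simp add: measure_restrict_space)
  finally have "measure lebesgue01 (sym_diff S (U K)) < e"
    using TS TU by linarith
  moreover have "A K \<subseteq> {..<m * 2 ^ K}"
    by (auto simp: A_def)
  ultimately show ?thesis
    unfolding U_def by blast
qed

lemma in_closed_span_indicator:
  assumes phi: "orthonormal_seq phi" and m: "m > 0"
    and cells: "\<And>K q. q < m * 2 ^ K \<Longrightarrow> in_closed_span phi (indicator (part_int (m * 2 ^ K) q))"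
    and S: "S \<in> sets lebesgue01"
  shows "in_closed_span phi (indicator S)"
proof (rule in_closed_span_approx[OF phi L2_indicator[OF S]])
  fix e :: real assume "e > 0"
  then obtain K A where A: "A \<subseteq> {..<m * 2 ^ K}"
    and small: "measure lebesgue01 (sym_diff S (\<Union>q\<in>A. part_int (m * 2 ^ K) q)) < e"
    using dyadic_cells_approximate_set[OF m S] by blast
  define U where "U = (\<Union>q\<in>A. part_int (m * 2 ^ K) q)"
  have finite: "finite A"
    using A finite_nat_iff_bounded by blast
  have U: "U \<in> sets lebesgue01"
    unfolding U_def using A finite by (intro sets.finite_UN part_int_sets) auto
  have "disjoint_family_on (part_int (m * 2 ^ K)) A"
    using m by (auto simp: disjoint_family_on_def mem_part_int)
  then have indicator_U: "indicator U = (\<lambda>x. \<Sum>q\<in>A. indicator (part_int (m * 2 ^ K) q) x)"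
    unfolding U_def by (simp add: fun_eq_iff indicator_UN_disjoint[OF finite])
  have "in_closed_span phi (\<lambda>x. \<Sum>q\<in>A. indicator (part_int (m * 2 ^ K) q) x)"
    using finite by (rule in_closed_span_sum[OF phi]) (use A cells in \<open>auto intro: L2_indicator_part_int\<close>)
  then have "in_closed_span phi (indicator U)"
    unfolding indicator_U .
  moreover have "l2_dist_sq (indicator S) (indicator U) < e"
    using small l2_dist_sq_indicator[OF S U] by (simp add: U_def)
  ultimately show "\<exists>g. g \<in> L2 \<and> in_closed_span phi g \<and> l2_dist_sq (indicator S) g < e"
    using L2_indicator[OF U] by blast
qed

text \<open>A bounded function is uniformly within \<open>d\<close> of the simple function \<open>d \<lfloor>f / d\<rfloor>\<close>.\<close>

lemma in_closed_span_bounded: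
  assumes phi: "orthonormal_seq phi"
    and indicators: "\<And>S. S \<in> sets lebesgue01 \<Longrightarrow> in_closed_span phi (indicator S)"
    and f: "f \<in> borel_measurable lebesgue01" and B: "\<And>x. \<bar>f x\<bar> \<le> B"
  shows "in_closed_span phi f"
proof (rule in_closed_span_approx[OF phi L2_bounded[OF f B]])
  fix e :: real assume "e > 0"
  define d where "d = sqrt e / 2"
  have d: "d > 0" "d * d < e"
    using \<open>e > 0\<close> by (simp_all add: d_def)
  define N where "N = \<lceil>B / d\<rceil> + 1"
  define A where "A k = {x \<in> space lebesgue01. \<lfloor>f x / d\<rfloor> = k}" for k
  define g where "g x = (\<Sum>k\<in>{-N..N}. (real_of_int k * d) * indicator (A k) x)" for x
  have A: "A k \<in> sets lebesgue01" for k
    unfolding A_def using f by measurable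
  have gL2: "g \<in> L2"
    unfolding g_def[abs_def] by (intro L2_sum L2_mult L2_indicator A)
  have "in_closed_span phi g"
    unfolding g_def[abs_def]
    by (intro in_closed_span_sum[OF phi] conjI L2_mult L2_indicator A in_closed_span_mult indicators)
      simp
  moreover have "l2_dist_sq f g < e"
  proof -
    have g: "g x = real_of_int \<lfloor>f x / d\<rfloor> * d" if "x \<in> space lebesgue01" for x
    proof -
      have "- B / d \<le> f x / d" "f x / d \<le> B / d"
        using B[of x] d(1) by (auto simp: abs_le_iff field_simps)
      moreover have "B / d \<le> real_of_int \<lceil>B / d\<rceil>"
        by (rule le_of_int_ceiling)
      moreover have "real_of_int \<lfloor>f x / d\<rfloor> \<le> f x / d" "f x / d < real_of_int \<lfloor>f x / d\<rfloor> + 1"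
        by (rule of_int_floor_le, rule real_of_int_floor_add_one_gt)
      ultimately have "real_of_int \<lfloor>f x / d\<rfloor> \<le> real_of_int N" "real_of_int (- N) \<le> real_of_int \<lfloor>f x / d\<rfloor>"
        unfolding N_def by simp_all linarith+
      then have "\<lfloor>f x / d\<rfloor> \<in> {-N..N}"
        by (simp only: of_int_le_iff atLeastAtMost_iff)
      then have "g x = (\<Sum>k\<in>{-N..N}. if k = \<lfloor>f x / d\<rfloor> then real_of_int k * d else 0)"
        unfolding g_def using that by (intro sum.cong) (auto simp: A_def)
      also have "\<dots> = real_of_int \<lfloor>f x / d\<rfloor> * d"
        using \<open>\<lfloor>f x / d\<rfloor> \<in> {-N..N}\<close> by simp
      finally show ?thesis .
    qed
    have "(f x - g x) * (f x - g x) \<le> d * d" if "x \<in> space lebesgue01" for x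
    proof -
      have "real_of_int \<lfloor>f x / d\<rfloor> * d \<le> f x" "f x < (real_of_int \<lfloor>f x / d\<rfloor> + 1) * d"
        using d(1) by (rule floor_divide_lower, rule floor_divide_upper)
      then show ?thesis
        using g[OF that] by (intro mult_mono) (auto simp: algebra_simps)
    qed
    then have "l2_dist_sq f g \<le> (LINT x|lebesgue01. d * d)"
      unfolding l2_dist_sq_def l2_inner_def
      using integrable_L2_mult[OF L2_diff[OF L2_bounded[OF f B] gL2] L2_diff[OF L2_bounded[OF f B] gL2]]
        finite_measure.integrable_const[OF finite_measure_lebesgue01]
      by (intro integral_mono) auto
    also have "\<dots> = d * d"
      by (simp add: measure_restrict_space)
    finally show ?thesis
      using d(2) by linarith
  qed
  ultimately show "\<exists>g. g \<in> L2 \<and> in_closed_span phi g \<and> l2_dist_sq f g < e"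
    using gL2 by blast
qed

lemma in_closed_span_L2:
  assumes phi: "orthonormal_seq phi"
    and indicators: "\<And>S. S \<in> sets lebesgue01 \<Longrightarrow> in_closed_span phi (indicator S)"
    and f: "f \<in> L2"
  shows "in_closed_span phi f"
proof (rule in_closed_span_approx[OF phi f])
  fix e :: real assume "e > 0"
  define t where "t n x = max (- real n) (min (real n) (f x))" for n x
  have fm: "f \<in> borel_measurable lebesgue01"
    using L2_borel_measurable[OF f] .
  have tm: "t n \<in> borel_measurable lebesgue01" for n
    unfolding t_def[abs_def] using fm by measurable
  have tb: "\<bar>t n x\<bar> \<le> real n" for n x
    by (auto simp: t_def)
  have "(\<lambda>n. LINT x|lebesgue01. (f x - t n x) * (f x - t n x)) \<longlonglongrightarrow> (LINT x|lebesgue01. 0)"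
  proof (rule integral_dominated_convergence[where w = "\<lambda>x. (f x)\<^sup>2"])
    show "integrable lebesgue01 (\<lambda>x. (f x)\<^sup>2)"
      using L2_integrable_square[OF f] .
    show "AE x in lebesgue01. (\<lambda>n. (f x - t n x) * (f x - t n x)) \<longlonglongrightarrow> 0" 
    proof (rule AE_I2)
      fix x
      have "\<forall>\<^sub>F n in sequentially. (f x - t n x) * (f x - t n x) = 0"
        unfolding eventually_sequentially
        by (rule exI[of _ "nat \<lceil>\<bar>f x\<bar>\<rceil>"]) (auto simp: t_def)
      then show "(\<lambda>n. (f x - t n x) * (f x - t n x)) \<longlonglongrightarrow> 0"
        by (rule tendsto_eventually)
    qed
    show "AE x in lebesgue01. norm ((f x - t n x) * (f x - t n x)) \<le> (f x)\<^sup>2" for n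
    proof (rule AE_I2)
      fix x
      have "\<bar>f x - t n x\<bar> \<le> \<bar>f x\<bar>"
        by (auto simp: t_def)
      then have "(f x - t n x)\<^sup>2 \<le> (f x)\<^sup>2"
        by (simp only: abs_le_square_iff)
      then show "norm ((f x - t n x) * (f x - t n x)) \<le> (f x)\<^sup>2"
        by (simp add: power2_eq_square)
    qed
  qed (use fm tm in auto)
  then have "(\<lambda>n. l2_dist_sq f (t n)) \<longlonglongrightarrow> 0"
    by (simp add: l2_dist_sq_def l2_inner_def)
  then obtain n where "norm (l2_dist_sq f (t n) - 0) < e"
    using LIMSEQ_D[OF _ \<open>e > 0\<close>] by blast
  then have "l2_dist_sq f (t n) < e"
    by (simp add: abs_less_iff)
  moreover have "t n \<in> L2" "in_closed_span phi (t n)"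
    using L2_bounded[OF tm[of n] tb[of n]] in_closed_span_bounded[OF phi indicators tm[of n] tb[of n]] .
  ultimately show "\<exists>g. g \<in> L2 \<and> in_closed_span phi g \<and> l2_dist_sq f g < e"
    by blast
qed

lemma step_haar_basis_expansion:
  assumes m: "m > 0" and u: "orthonormal_on m {..<m} u" and f: "f \<in> L2"
  shows "(\<lambda>N. l2_norm (\<lambda>x. f x - (\<Sum>j<N. l2_inner f (step_haar_basis m u j) * step_haar_basis m u j x)))
    \<longlonglongrightarrow> 0"
proof -
  note phi = orthonormal_seq_step_haar_basis[OF m u]
  have "in_closed_span (step_haar_basis m u) (indicator (part_int (m * 2 ^ K) q))"
    if "q < m * 2 ^ K" for K q
    by (rule in_closed_span_if_in_span[OF indicator_part_int_in_span[OF m u that]])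
  then have "in_closed_span (step_haar_basis m u) (indicator S)" if "S \<in> sets lebesgue01" for S
    by (rule in_closed_span_indicator[OF phi m _ that])
  then show ?thesis
    by (rule in_closed_span_expansion[OF phi f in_closed_span_L2[OF phi _ f]])
qed

lemma step_embed_mult: "c * step_embed n a x = step_embed n (\<lambda>i. c * a i) x"
  by (simp add: step_embed_def sum_distrib_left mult_ac)

lemma integral_op_step_embed:
  "integral_op (induced_graphon n (\<lambda>i j. real n * D i j)) (step_embed n a) = step_embed n (mat_vec n D a)"
proof -
  have "mat_vec n D (step_coeffs n (step_embed n a)) = mat_vec n D a"
    by (intro ext mat_vec_cong) (simp add: step_coeffs_step_embed)
  then show ?thesis
    by (simp add: integral_op_induced_graphon step_embed_L2)
qed

lemma integral_op_haar:
  assumes "n > 0" "q < n * 2 ^ k"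
  shows "integral_op (induced_graphon n (\<lambda>i j. real n * D i j)) (haar (n * 2 ^ k) q) = (\<lambda>x. 0)"
  using assms by (simp add: integral_op_induced_graphon haar_L2 step_coeffs_haar mat_vec_def
      step_embed_def[abs_def])

lemma op_orth_eigenbasis_step_haar_basis:
  assumes "m > 0" "orthonormal_on m {..<m} u"
    and "\<And>j x. T (step_haar_basis m u j) x = lam j * step_haar_basis m u j x"
  shows "op_orth_eigenbasis T lam (step_haar_basis m u)"
  using orthonormal_seq_step_haar_basis[OF assms(1,2)] step_haar_basis_expansion[OF assms(1,2)] assms(3)
  by (simp add: op_orth_eigenbasis_def orthonormal_seq_def)

lemma op_orth_eigenbasis_exists:
  assumes sym: "\<forall>i<n. \<forall>j<n. D i j = D j i"
  shows "\<exists>lam phi. op_orth_eigenbasis (integral_op (induced_graphon n (\<lambda>i j. real n * D i j))) lam phi"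
proof (cases "n > 0")
  case True
  obtain lamD psi where psi: "orthonormal_on n {..<n} psi"
    and eig: "\<forall>j<n. \<forall>i<n. mat_vec n D (psi j) i = lamD j * psi j i"
    using mat_orth_eigenbasis_exists[OF sym] by (auto simp: mat_orth_eigenbasis_iff)
  define lam where "lam j = (if j < n then lamD j else 0)" for j
  have "integral_op (induced_graphon n (\<lambda>i j. real n * D i j)) (step_haar_basis n psi j) x
      = lam j * step_haar_basis n psi j x" for j x
  proof (cases "j < n")
    case j: True
    have "step_embed n (mat_vec n D (psi j)) = step_embed n (\<lambda>i. lamD j * psi j i)"
      using eig j by (intro step_embed_cong) simp
    then show ?thesis
      using j by (simp add: step_haar_basis_def lam_def integral_op_step_embed step_embed_mult)
  next
    case False
    then have "n \<le> j" by simp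
    then obtain k q where "q < n * 2 ^ k" "j = n * 2 ^ k + q"
      by (rule step_haar_basis_index_cases[OF True])
    then show ?thesis
      using True False by (simp add: step_haar_basis_haar integral_op_haar lam_def)
  qed
  then show ?thesis
    using op_orth_eigenbasis_step_haar_basis[OF True psi] by blast
next
  case False
  have "orthonormal_on 1 {..<1::nat} (\<lambda>_ _. 1)"
    by (auto simp: orthonormal_on_def dot_def less_one)
  moreover have "integral_op (induced_graphon n (\<lambda>i j. real n * D i j)) g x = 0 * g x" for g x
    using False by (simp add: integral_op_def induced_graphon_def)
  ultimately have "op_orth_eigenbasis (integral_op (induced_graphon n (\<lambda>i j. real n * D i j)))
      (\<lambda>_. 0) (step_haar_basis 1 (\<lambda>_ _. 1))"
    by (intro op_orth_eigenbasis_step_haar_basis) simp_all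
  then show ?thesis
    by blast
qed

lemma step_embed_diff: "step_embed n a x - step_embed n b x = step_embed n (\<lambda>i. a i - b i) x"
  by (simp add: step_embed_def sum_subtractf left_diff_distrib right_diff_distrib)

lemma eigenfunction_step_coeffs:
  assumes phi: "phi \<in> L2"
    and eig: "l2_norm (\<lambda>x. integral_op (induced_graphon n (\<lambda>i j. real n * D i j)) phi x - mu * phi x) = 0"
  shows "AE x in lebesgue01. step_embed n (mat_vec n D (step_coeffs n phi)) x = mu * phi x"
    and "\<forall>i<n. mat_vec n D (step_coeffs n phi) i = mu * step_coeffs n phi i"
proof -
  have "(\<lambda>x. step_embed n (mat_vec n D (step_coeffs n phi)) x - mu * phi x) \<in> L2"
    by (intro L2_diff L2_mult step_embed_L2 phi)
  from l2_norm_eq_0_AE[OF this] eig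
  show AE: "AE x in lebesgue01. step_embed n (mat_vec n D (step_coeffs n phi)) x = mu * phi x"
    by (simp add: integral_op_induced_graphon[OF phi])
  have "step_coeffs n (step_embed n (mat_vec n D (step_coeffs n phi))) = step_coeffs n (\<lambda>x. mu * phi x)"
    using phi by (intro step_coeffs_cong_AE[OF _ _ AE] L2_borel_measurable step_embed_L2 L2_mult)
  then show "\<forall>i<n. mat_vec n D (step_coeffs n phi) i = mu * step_coeffs n phi i"
    by (metis step_coeffs_mult step_coeffs_step_embed)
qed

lemma eigenfunction_is_step:
  assumes phi: "phi \<in> L2" and "mu \<noteq> 0"
    and eig: "l2_norm (\<lambda>x. integral_op (induced_graphon n (\<lambda>i j. real n * D i j)) phi x - mu * phi x) = 0"
  shows "AE x in lebesgue01. phi x = step_embed n (step_coeffs n phi) x"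
proof -
  have "step_embed n (mat_vec n D (step_coeffs n phi)) = step_embed n (\<lambda>i. mu * step_coeffs n phi i)"
    using eigenfunction_step_coeffs(2)[OF phi eig] by (intro step_embed_cong) simp
  then have "AE x in lebesgue01. step_embed n (step_coeffs n phi) x = phi x"
    using eigenfunction_step_coeffs(1)[OF phi eig] \<open>mu \<noteq> 0\<close> by (simp add: step_embed_mult[symmetric])
  then show ?thesis
    by (simp add: eq_commute)
qed

lemma eigenvectors_orthogonal:
  assumes sym: "\<forall>i<n. \<forall>j<n. D i j = D j i"
    and x: "\<forall>i<n. mat_vec n D x i = a * x i" and y: "\<forall>i<n. mat_vec n D y i = b * y i"
  shows "(a - b) * dot n x y = 0"
proof -
  have "a * dot n x y = dot n (mat_vec n D x) y"
    using x by (simp add: dot_mult_left[symmetric] cong: dot_cong)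
  also have "\<dots> = dot n x (mat_vec n D y)"
    by (rule mat_vec_symmetric[OF sym])
  also have "\<dots> = b * dot n x y"
    using y by (simp add: dot_mult_right[symmetric] cong: dot_cong)
  finally show ?thesis
    by (simp add: algebra_simps)
qed

text \<open>Functional calculus does not depend on the eigenbasis: an orthonormal eigenbasis \<open>\<psi>\<close> and
  finitely many eigenvectors \<open>e\<^sub>j\<close> spanning every \<open>\<psi>\<^sub>l\<close> with \<open>\<lambda>\<^sub>l \<noteq> 0\<close> give the same \<open>h(D)\<close>.\<close>

lemma functional_calculus_eigenvectors:
  assumes sym: "\<forall>i<n. \<forall>j<n. D i j = D j i" and h0: "h 0 = 0"
    and psi: "orthonormal_on n {..<n} psi"
    and eig_psi: "\<forall>l<n. \<forall>i<n. mat_vec n D (psi l) i = lam l * psi l i"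
    and J: "finite J" and eig_e: "\<forall>j\<in>J. \<forall>i<n. mat_vec n D (e j) i = mu j * e j i"
    and span: "\<forall>l<n. lam l \<noteq> 0 \<longrightarrow> (\<forall>i<n. psi l i = (\<Sum>j\<in>J. dot n (psi l) (e j) * e j i))"
    and i: "i < n"
  shows "(\<Sum>j\<in>J. h (mu j) * dot n (e j) c * e j i)
    = mat_vec n (\<lambda>i k. \<Sum>l<n. h (lam l) * psi l i * psi l k) c i"
proof -
  have component: "(\<Sum>j\<in>J. h (mu j) * dot n (psi l) (e j) * e j i) = h (lam l) * psi l i"
    if l: "l < n" for l
  proof -
    have "h (mu j) * dot n (psi l) (e j) = h (lam l) * dot n (psi l) (e j)" if "j \<in> J" for j
    proof -
      have "(lam l - mu j) * dot n (psi l) (e j) = 0"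
        using l that eig_psi eig_e by (intro eigenvectors_orthogonal[OF sym]) simp_all
      then show ?thesis
        by (cases "dot n (psi l) (e j) = 0") simp_all
    qed
    then have "(\<Sum>j\<in>J. h (mu j) * dot n (psi l) (e j) * e j i)
        = (\<Sum>j\<in>J. h (lam l) * dot n (psi l) (e j) * e j i)"
      by (intro sum.cong) simp_all
    also have "\<dots> = h (lam l) * (\<Sum>j\<in>J. dot n (psi l) (e j) * e j i)"
      by (simp add: sum_distrib_left mult.assoc)
    also have "\<dots> = h (lam l) * psi l i"
      using span l i h0 by (cases "lam l = 0") simp_all
    finally show ?thesis .
  qed
  have "(\<Sum>j\<in>J. h (mu j) * dot n (e j) c * e j i)
      = (\<Sum>j\<in>J. h (mu j) * (\<Sum>l<n. dot n c (psi l) * dot n (psi l) (e j)) * e j i)"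
  proof (intro sum.cong refl arg_cong2[where f = "(*)"] arg_cong[where f = "(*) _"])
    fix j
    have "dot n (e j) c = dot n (e j) (\<lambda>k. \<Sum>l<n. dot n c (psi l) * psi l k)"
      using orthonormal_basis_expansion[OF psi] by (intro dot_cong) auto
    then show "dot n (e j) c = (\<Sum>l<n. dot n c (psi l) * dot n (psi l) (e j))"
      by (simp add: dot_sum_right dot_commute[of n "e j"])
  qed
  also have "\<dots> = (\<Sum>j\<in>J. \<Sum>l<n. dot n c (psi l) * (h (mu j) * dot n (psi l) (e j) * e j i))"
    by (intro sum.cong refl) (simp add: sum_distrib_left sum_distrib_right mult_ac)
  also have "\<dots> = (\<Sum>l<n. \<Sum>j\<in>J. dot n c (psi l) * (h (mu j) * dot n (psi l) (e j) * e j i))"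
    by (rule sum.swap)
  also have "\<dots> = (\<Sum>l<n. dot n c (psi l) * (h (lam l) * psi l i))"
    using component by (simp add: sum_distrib_left[symmetric])
  also have "\<dots> = (\<Sum>l<n. \<Sum>k<n. h (lam l) * psi l i * psi l k * c k)"
    by (intro sum.cong refl) (simp add: dot_def sum_distrib_left sum_distrib_right mult_ac)
  also have "\<dots> = (\<Sum>k<n. \<Sum>l<n. h (lam l) * psi l i * psi l k * c k)"
    by (rule sum.swap)
  also have "\<dots> = mat_vec n (\<lambda>i k. \<Sum>l<n. h (lam l) * psi l i * psi l k) c i"
    by (simp add: mat_vec_def sum_distrib_right)
  finally show ?thesis .
qed

lemma step_vector_in_finite_span:
  assumes phi: "op_orth_eigenbasis T mu phi" and J: "finite J"
    and step: "\<forall>j\<in>J. AE x in lebesgue01. phi j x = step_embed n (step_coeffs n (phi j)) x"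
    and outside: "\<forall>j. j \<notin> J \<longrightarrow> dot n a (step_coeffs n (phi j)) = 0"
    and i: "i < n"
  shows "a i = (\<Sum>j\<in>J. dot n a (step_coeffs n (phi j)) * step_coeffs n (phi j) i)"
proof -
  define e where "e j = step_coeffs n (phi j)" for j
  define r where "r = (\<lambda>i. a i - (\<Sum>j\<in>J. dot n a (e j) * e j i))"
  have phiL2: "\<And>j. phi j \<in> L2"
    using phi by (simp add: op_orth_eigenbasis_def)
  have coeff: "l2_inner (step_embed n a) (phi j) = dot n a (e j)" for j
    by (simp add: l2_inner_step_embed_left phiL2 e_def)
  obtain N0 where N0: "J \<subseteq> {..<N0}"
    using J finite_nat_iff_bounded by auto
  have eventually_eq: "l2_norm (\<lambda>x. step_embed n a x - (\<Sum>j<N. l2_inner (step_embed n a) (phi j) * phi j x))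
      = l2_norm (step_embed n r)" if "N \<ge> N0" for N
  proof (rule l2_norm_cong_AE)
    have "AE x in lebesgue01. \<forall>j\<in>J. phi j x = step_embed n (e j) x"
      using step J by (simp add: AE_finite_all e_def)
    then show "AE x in lebesgue01. step_embed n a x - (\<Sum>j<N. l2_inner (step_embed n a) (phi j) * phi j x)
        = step_embed n r x"
    proof eventually_elim
      case (elim x)
      have "(\<Sum>j<N. l2_inner (step_embed n a) (phi j) * phi j x) = (\<Sum>j\<in>J. dot n a (e j) * phi j x)"
        using N0 that outside by (intro sum.mono_neutral_cong_right) (auto simp: coeff e_def)
      also have "\<dots> = step_embed n (\<lambda>i. \<Sum>j\<in>J. dot n a (e j) * e j i) x"
        using elim by (simp add: step_embed_lincomb)
      finally show ?case
        by (simp add: step_embed_diff r_def)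
    qed
  qed (use phiL2 in \<open>auto intro!: L2_borel_measurable L2_diff L2_sum L2_mult step_embed_L2\<close>)
  have "(\<lambda>N. l2_norm (\<lambda>x. step_embed n a x - (\<Sum>j<N. l2_inner (step_embed n a) (phi j) * phi j x)))
      \<longlonglongrightarrow> 0"
    using phi step_embed_L2 by (simp add: op_orth_eigenbasis_def)
  then have "(\<lambda>N. l2_norm (step_embed n r)) \<longlonglongrightarrow> 0"
    by (rule Lim_transform_eventually) (use eventually_eq in \<open>auto simp: eventually_sequentially\<close>)
  then have "l2_norm (step_embed n r) = 0"
    by (simp add: LIMSEQ_const_iff)
  then have "dot n r r = 0"
    using l2_inner_self_nonneg by (simp add: l2_norm_def l2_inner_step_embed)
  then show ?thesis
    using i by (simp add: dot_self_eq_0_iff r_def e_def)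
qed

lemma eigenbasis_partial_sums_eventually_eq:
  assumes sym: "\<forall>i<n. \<forall>j<n. D i j = D j i" and h0: "h 0 = 0" and f: "f \<in> L2"
    and psi: "mat_orth_eigenbasis n D lam psi"
    and phi: "op_orth_eigenbasis (integral_op (induced_graphon n (\<lambda>i j. real n * D i j))) mu phi"
  shows "\<exists>N0. \<forall>N\<ge>N0. AE x in lebesgue01. (\<Sum>j<N. h (mu j) * l2_inner f (phi j) * phi j x)
    = integral_op (induced_graphon n (\<lambda>i j. real n * (\<Sum>l<n. h (lam l) * psi l i * psi l j))) f x"
proof -
  define e where "e j = step_coeffs n (phi j)" for j
  define J where "J = {j. mu j \<noteq> 0}"
  have phiL2: "\<And>j. phi j \<in> L2"
    and orth: "\<And>j k. l2_inner (phi j) (phi k) = (if j = k then 1 else 0)"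
    and eig: "\<And>j. l2_norm (\<lambda>x. integral_op (induced_graphon n (\<lambda>i j. real n * D i j)) (phi j) x
      - mu j * phi j x) = 0"
    using phi by (auto simp: op_orth_eigenbasis_def)
  have eig_e: "\<forall>i<n. mat_vec n D (e j) i = mu j * e j i" for j
    using eigenfunction_step_coeffs(2)[OF phiL2 eig] by (simp add: e_def)
  have eig_eJ: "\<forall>j\<in>J. \<forall>i<n. mat_vec n D (e j) i = mu j * e j i"
    using eig_e by blast
  have step: "\<forall>j\<in>J. AE x in lebesgue01. phi j x = step_embed n (e j) x"
    using eigenfunction_is_step[OF phiL2 _ eig] by (simp add: J_def e_def)
  have inner: "l2_inner g (phi j) = dot n (e j) (step_coeffs n g)" if "j \<in> J" "g \<in> L2" for g j
  proof -
    have "l2_inner (phi j) g = l2_inner (step_embed n (e j)) g"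
      using step that by (intro l2_inner_cong_AE L2_borel_measurable phiL2 step_embed_L2) auto
    then show ?thesis
      by (simp add: l2_inner_commute[of g] l2_inner_step_embed_left that(2))
  qed
  have "orthonormal_on n J e"
    unfolding orthonormal_on_def
  proof (intro ballI)
    fix j k assume "j \<in> J" "k \<in> J"
    then show "dot n (e j) (e k) = (if j = k then 1 else 0)"
      using inner[OF \<open>j \<in> J\<close> phiL2[of k]] orth[of k j] by (auto simp: e_def)
  qed
  then have J: "finite J"
    by (rule orthonormal_on_finite)
  have psi_l: "orthonormal_on n {..<n} psi" "\<forall>l<n. \<forall>i<n. mat_vec n D (psi l) i = lam l * psi l i"
    using psi by (simp_all add: mat_orth_eigenbasis_iff)
  have span: "\<forall>l<n. lam l \<noteq> 0 \<longrightarrow> (\<forall>i<n. psi l i = (\<Sum>j\<in>J. dot n (psi l) (e j) * e j i))"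
  proof (intro allI impI)
    fix l i assume "l < n" "lam l \<noteq> 0" "i < n"
    have "dot n (psi l) (e j) = 0" if "j \<notin> J" for j
    proof -
      have "(mu j - lam l) * dot n (e j) (psi l) = 0"
        using psi_l(2) \<open>l < n\<close> by (intro eigenvectors_orthogonal[OF sym eig_e]) simp
      then show ?thesis
        using \<open>lam l \<noteq> 0\<close> that by (simp add: J_def dot_commute)
    qed
    then show "psi l i = (\<Sum>j\<in>J. dot n (psi l) (e j) * e j i)"
      using step_vector_in_finite_span[OF phi J _ _ \<open>i < n\<close>, of "psi l"] step by (simp add: e_def)
  qed
  obtain N0 where N0: "J \<subseteq> {..<N0}"
    using J finite_nat_iff_bounded by auto
  have "AE x in lebesgue01. (\<Sum>j<N. h (mu j) * l2_inner f (phi j) * phi j x)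
      = integral_op (induced_graphon n (\<lambda>i j. real n * (\<Sum>l<n. h (lam l) * psi l i * psi l j))) f x"
    if "N \<ge> N0" for N
  proof -
    have "AE x in lebesgue01. \<forall>j\<in>J. phi j x = step_embed n (e j) x"
      using step J by (simp add: AE_finite_all)
    then show ?thesis
    proof eventually_elim
      case (elim x)
      have "(\<Sum>j<N. h (mu j) * l2_inner f (phi j) * phi j x)
          = (\<Sum>j\<in>J. (h (mu j) * dot n (e j) (step_coeffs n f)) * step_embed n (e j) x)"
        using N0 that elim h0 by (intro sum.mono_neutral_cong_right) (auto simp: J_def inner f)
      also have "\<dots> = step_embed n (\<lambda>i. \<Sum>j\<in>J. h (mu j) * dot n (e j) (step_coeffs n f) * e j i) x"
        by (rule step_embed_lincomb)
      also have "\<dots> = step_embed n (mat_vec n (\<lambda>i k. \<Sum>l<n. h (lam l) * psi l i * psi l k) (step_coeffs n f)) x"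
        using functional_calculus_eigenvectors[where h = h and e = e and mu = mu, OF sym h0 psi_l J eig_eJ span]
        by (rule step_embed_cong[THEN fun_cong]) simp
      finally show ?case
        by (simp add: integral_op_induced_graphon[OF f])
    qed
  qed
  then show ?thesis
    by blast
qed

lemma mat_fun_eigenbasis:
  assumes "\<forall>i<n. \<forall>j<n. D i j = D j i"
  obtains lam psi where "mat_orth_eigenbasis n D lam psi"
    "\<And>h. mat_fun h n D = (\<lambda>i k. \<Sum>j<n. h (lam j) * psi j i * psi j k)"
proof -
  define p where "p = (SOME (lam, psi). mat_orth_eigenbasis n D lam psi)"
  have "mat_orth_eigenbasis n D (fst p) (snd p)"
    using someI_ex[of "\<lambda>(lam, psi). mat_orth_eigenbasis n D lam psi"] mat_orth_eigenbasis_exists[OF assms]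
    by (auto simp: p_def split: prod.splits)
  moreover have "mat_fun h n D = (\<lambda>i k. \<Sum>j<n. h (fst p j) * snd p j i * snd p j k)" for h
    unfolding mat_fun_def p_def[symmetric] by (simp add: case_prod_beta)
  ultimately show ?thesis
    using that by blast
qed

lemma op_fun_eigenbasis:
  assumes "\<exists>lam phi. op_orth_eigenbasis T lam phi"
  obtains mu phi where "op_orth_eigenbasis T mu phi"
    "\<And>h psi. op_fun h T psi = (SOME g. g \<in> L2 \<and>
       (\<lambda>N. l2_norm (\<lambda>x. g x - (\<Sum>j<N. h (mu j) * l2_inner psi (phi j) * phi j x))) \<longlonglongrightarrow> 0)"
proof -
  define p where "p = (SOME (lam, phi). op_orth_eigenbasis T lam phi)"
  have "op_orth_eigenbasis T (fst p) (snd p)"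
    using someI_ex[of "\<lambda>(lam, phi). op_orth_eigenbasis T lam phi"] assms
    by (auto simp: p_def split: prod.splits)
  moreover have "op_fun h T psi = (SOME g. g \<in> L2 \<and>
      (\<lambda>N. l2_norm (\<lambda>x. g x - (\<Sum>j<N. h (fst p j) * l2_inner psi (snd p j) * snd p j x))) \<longlonglongrightarrow> 0)"
    for h psi
    unfolding op_fun_def p_def[symmetric] by (simp add: case_prod_beta)
  ultimately show ?thesis
    using that by blast
qed

lemma l2_limit_eventually_AE_eq:
  assumes G: "G \<in> L2" and S: "\<And>N. S N \<in> L2"
    and eventually_eq: "\<forall>N\<ge>N0. AE x in lebesgue01. S N x = G x"
  shows "l2_norm (\<lambda>x. (SOME g. g \<in> L2 \<and> (\<lambda>N. l2_norm (\<lambda>x. g x - S N x)) \<longlonglongrightarrow> 0) x - G x) = 0"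
proof -
  have dist: "l2_norm (\<lambda>x. g x - S N x) = l2_norm (\<lambda>x. g x - G x)" if "g \<in> L2" "N \<ge> N0" for g N
    using eventually_eq that(2) S G that(1)
    by (intro l2_norm_cong_AE L2_borel_measurable L2_diff) (auto elim!: AE_mp)
  have "(\<lambda>N. l2_norm (\<lambda>x. G x - S N x)) \<longlonglongrightarrow> 0"
    by (rule tendsto_eventually) (use dist[OF G] in \<open>auto simp: eventually_sequentially\<close>)
  with G have "\<exists>g. g \<in> L2 \<and> (\<lambda>N. l2_norm (\<lambda>x. g x - S N x)) \<longlonglongrightarrow> 0"
    by blast
  from someI_ex[OF this] obtain g
    where g: "g = (SOME g. g \<in> L2 \<and> (\<lambda>N. l2_norm (\<lambda>x. g x - S N x)) \<longlonglongrightarrow> 0)"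
      "g \<in> L2" "(\<lambda>N. l2_norm (\<lambda>x. g x - S N x)) \<longlonglongrightarrow> 0"
    by blast
  have "(\<lambda>N. l2_norm (\<lambda>x. g x - G x)) \<longlonglongrightarrow> 0"
    by (rule Lim_transform_eventually[OF g(3)]) (use dist[OF g(2)] in \<open>auto simp: eventually_sequentially\<close>)
  then show ?thesis
    using g(1) by (simp add: LIMSEQ_const_iff)
qed

theorem proposition4p4:
  fixes n :: nat and Delta :: "nat \<Rightarrow> nat \<Rightarrow> real" and h :: "real \<Rightarrow> real"
  assumes sym: "\<forall>i<n. \<forall>j<n. Delta i j = Delta j i"
    and cont: "continuous_on UNIV h"
    and h0: "h 0 = 0"
  shows "\<forall>psi\<in>L2.
    l2_norm (\<lambda>x. op_fun h (integral_op (induced_graphon n (\<lambda>i j. real n * Delta i j))) psi x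
                 - integral_op (induced_graphon n (\<lambda>i j. real n * mat_fun h n Delta i j)) psi x) = 0"
proof
  fix f assume f: "f \<in> L2"
  obtain lam psi where psi: "mat_orth_eigenbasis n Delta lam psi"
    and mat_fun: "\<And>h. mat_fun h n Delta = (\<lambda>i k. \<Sum>j<n. h (lam j) * psi j i * psi j k)"
    using mat_fun_eigenbasis[OF sym] by blast
  obtain mu phi where phi: "op_orth_eigenbasis (integral_op (induced_graphon n (\<lambda>i j. real n * Delta i j))) mu phi"
    and op_fun: "\<And>h psi. op_fun h (integral_op (induced_graphon n (\<lambda>i j. real n * Delta i j))) psi
      = (SOME g. g \<in> L2 \<and> (\<lambda>N. l2_norm (\<lambda>x. g x - (\<Sum>j<N. h (mu j) * l2_inner psi (phi j) * phi j x)))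
          \<longlonglongrightarrow> 0)"
    using op_fun_eigenbasis[OF op_orth_eigenbasis_exists[OF sym]] by blast
  obtain N0 where "\<forall>N\<ge>N0. AE x in lebesgue01. (\<Sum>j<N. h (mu j) * l2_inner f (phi j) * phi j x)
      = integral_op (induced_graphon n (\<lambda>i j. real n * mat_fun h n Delta i j)) f x"
    using eigenbasis_partial_sums_eventually_eq[where h = h, OF sym h0 f psi phi] by (auto simp: mat_fun)
  moreover have "(\<lambda>x. \<Sum>j<N. h (mu j) * l2_inner f (phi j) * phi j x) \<in> L2" for N
    using phi by (intro L2_sum L2_mult) (simp add: op_orth_eigenbasis_def)
  ultimately show "l2_norm (\<lambda>x. op_fun h (integral_op (induced_graphon n (\<lambda>i j. real n * Delta i j))) f x
      - integral_op (induced_graphon n (\<lambda>i j. real n * mat_fun h n Delta i j)) f x) = 0"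
    unfolding op_fun using integral_op_induced_graphon[OF f] step_embed_L2
    by (intro l2_limit_eventually_AE_eq) auto
qed

end
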